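(* Let $A$ be a self-contained band operator on $\ell^2(\mathbb{Z})$. Then $\nu(A)=\nu(A^* )$, and \[ \nu_N(A)\searrow\nu(A)=\frac{1}{\|A^{-1}\|}\qquad\text{as }N\to\infty. \]
   Context: A band operator on $\ell^2(\mathbb{Z})$ is a bounded operator with matrix entries $A_{ij}=0$ for $|i-j|>w$ (some $w$). For $N\in\mathbb{N}$, an $N$-column submatrix of $A$ is $C=(C_{ij})_{i\in1-w..N+w,\,j\in1..N}$ with $C_{ij}=A_{k+i,k+j}$ for some $k\in\mathbb{Z}$ (where $a..b=\{n\in\mathbb{Z}:a\le n\le b\}$); $A$ is self-contained if each such submatrix (for every $N$) occurs for infinitely many $k$. $\nu(A):=\inf\{\|Ax\|:\|x\|=1\}$; $\nu_N(A):=\inf\{\|Ax\|:\|x\|=1,\operatorname{diam}(\operatorname{supp}x)<N\}$. Convention: $\|A^{-1}\|:=\infty$ if $A$ is not invertible and $1/\infty=0$. *)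

theory Defs
  imports "HOL-Analysis.Analysis"
begin

text \<open>Operators on l2(Z) are represented by their matrices a :: int => int => complex.
  A band operator with band width w is a matrix with a i j = 0 for |i-j| > w and
  uniformly bounded entries (equivalently, a bounded operator on l2(Z) with banded matrix).\<close>

definition l2 :: "(int \<Rightarrow> complex) set" where
  "l2 = {x. (\<lambda>i. (cmod (x i))\<^sup>2) summable_on UNIV}"

definition l2norm :: "(int \<Rightarrow> complex) \<Rightarrow> real" where
  "l2norm x = sqrt (\<Sum>\<^sub>\<infinity>i. (cmod (x i))\<^sup>2)"

definition band_op :: "(int \<Rightarrow> int \<Rightarrow> complex) \<Rightarrow> nat \<Rightarrow> bool" where
  "band_op a w \<longleftrightarrow> (\<forall>i j. \<bar>i - j\<bar> > int w \<longrightarrow> a i j = 0) \<and> (\<exists>C. \<forall>i j. cmod (a i j) \<le> C)"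

definition op_apply :: "(int \<Rightarrow> int \<Rightarrow> complex) \<Rightarrow> (int \<Rightarrow> complex) \<Rightarrow> int \<Rightarrow> complex" where
  "op_apply a x i = (\<Sum>j\<in>{j. a i j \<noteq> 0}. a i j * x j)"

definition adjoint_op :: "(int \<Rightarrow> int \<Rightarrow> complex) \<Rightarrow> int \<Rightarrow> int \<Rightarrow> complex" where
  "adjoint_op a = (\<lambda>i j. cnj (a j i))"

definition self_contained :: "(int \<Rightarrow> int \<Rightarrow> complex) \<Rightarrow> nat \<Rightarrow> bool" where
  "self_contained a w \<longleftrightarrow>
     (\<forall>N::nat. \<forall>k::int. infinite {k'::int. \<forall>i\<in>{1 - int w..int N + int w}. \<forall>j\<in>{1..int N}.
        a (k' + i) (k' + j) = a (k + i) (k + j)})"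

definition nu :: "(int \<Rightarrow> int \<Rightarrow> complex) \<Rightarrow> real" where
  "nu a = Inf {l2norm (op_apply a x) | x. x \<in> l2 \<and> l2norm x = 1}"

definition diam_supp :: "(int \<Rightarrow> complex) \<Rightarrow> ereal" where
  "diam_supp x = (if finite {i. x i \<noteq> 0} then
       (if {i. x i \<noteq> 0} = {} then 0
        else ereal (real_of_int (Max {i. x i \<noteq> 0} - Min {i. x i \<noteq> 0})))
     else \<infinity>)"

definition nu_N :: "(int \<Rightarrow> int \<Rightarrow> complex) \<Rightarrow> nat \<Rightarrow> real" where
  "nu_N a N = Inf {l2norm (op_apply a x) | x. x \<in> l2 \<and> l2norm x = 1 \<and> diam_supp x < ereal (real N)}"

definition op_invertible :: "(int \<Rightarrow> int \<Rightarrow> complex) \<Rightarrow> bool" where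
  "op_invertible a \<longleftrightarrow> bij_betw (op_apply a) l2 l2"

definition inv_norm :: "(int \<Rightarrow> int \<Rightarrow> complex) \<Rightarrow> ereal" where
  "inv_norm a = (if op_invertible a then
      ereal (Sup {l2norm (inv_into l2 (op_apply a) y) | y. y \<in> l2 \<and> l2norm y = 1})
    else \<infinity>)"

end

theory Submission
  imports Defs
begin

text \<open>
  \<open>\<nu>\<^sub>N(A)\<close> decreases to \<open>\<nu>(A)\<close> because finitely supported vectors are dense in \<open>l2\<close> and
  \<open>A\<close> is bounded.

  Self-containedness enters only through recurrence: every finite window of the matrix reappears
  arbitrarily far out. Given a finitely supported \<open>y\<close>, place \<open>2 w + 1\<close> copies of \<open>y\<close> far apart
  where \<open>A\<close> looks as it does near \<open>y\<close>. Counting dimensions, some nonzero combination \<open>z\<close> of the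
  copies is \<open>A x\<close> with \<open>x\<close> finitely supported, and then
  \<open>\<parallel>z\<parallel>\<^sup>2 = \<langle>A x, z\<rangle> = \<langle>x, A\<^sup>* z\<rangle> \<le> \<parallel>z\<parallel> \<parallel>A\<^sup>* z\<parallel> / \<nu>(A)\<close>. As the copies are disjoint this
  transfers to \<open>\<nu>(A) \<parallel>y\<parallel> \<le> \<parallel>A\<^sup>* y\<parallel>\<close>, so \<open>\<nu>(A) \<le> \<nu>(A\<^sup>*)\<close>, and equality holds by symmetry.

  If \<open>\<nu>(A) = \<nu>(A\<^sup>*) > 0\<close> then \<open>A\<close> is injective, and the residual of a best approximation of
  any \<open>y\<close> from the range of \<open>A\<close> lies in the kernel of \<open>A\<^sup>*\<close>, hence vanishes: \<open>A\<close> is bijective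
  and \<open>\<parallel>A\<^sup>-\<^sup>1\<parallel> = 1 / \<nu>(A)\<close>. If \<open>\<nu>(A\<^sup>*) = 0\<close>, almost-kernel vectors \<open>V\<^sub>m\<close> of \<open>A\<^sup>*\<close> on disjoint
  windows make \<open>\<Sum>\<^sub>m 2\<^sup>-\<^sup>m V\<^sub>m\<close> a vector outside the range of \<open>A\<close>.
\<close>

section \<open>Square-summable sequences\<close>

definition sqmod :: "(int \<Rightarrow> complex) \<Rightarrow> int \<Rightarrow> real" where
  "sqmod x = (\<lambda>i. (cmod (x i))\<^sup>2)"

definition l2norm2 :: "(int \<Rightarrow> complex) \<Rightarrow> real" where
  "l2norm2 x = (\<Sum>\<^sub>\<infinity>i. sqmod x i)"

definition supported_in :: "(int \<Rightarrow> complex) \<Rightarrow> int set \<Rightarrow> bool" where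
  "supported_in x S \<longleftrightarrow> (\<forall>i. i \<notin> S \<longrightarrow> x i = 0)"

lemma sqmod_nonneg [simp]: "0 \<le> sqmod x i"
  by (simp add: sqmod_def)

lemma supported_in_mono: "supported_in x S \<Longrightarrow> S \<subseteq> T \<Longrightarrow> supported_in x T"
  by (auto simp: supported_in_def)

lemma l2norm_eq_sqrt: "l2norm x = sqrt (l2norm2 x)"
  by (simp add: l2norm_def l2norm2_def sqmod_def)

lemma l2norm2_nonneg: "0 \<le> l2norm2 x"
  unfolding l2norm2_def by (rule infsum_nonneg) simp

lemma l2norm_nonneg: "0 \<le> l2norm x"
  by (simp add: l2norm_eq_sqrt l2norm2_nonneg)

lemma l2norm_power2: "(l2norm x)\<^sup>2 = l2norm2 x"
  by (simp add: l2norm_eq_sqrt l2norm2_nonneg)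

lemma l2_iff_summable: "x \<in> l2 \<longleftrightarrow> sqmod x summable_on UNIV"
  by (simp add: l2_def sqmod_def)

lemma L2_set_cmod_eq: "L2_set (\<lambda>i. cmod (x i)) F = sqrt (sum (sqmod x) F)"
  by (simp add: L2_set_def sqmod_def)

lemma sum_sqmod_le_l2norm2: "x \<in> l2 \<Longrightarrow> finite F \<Longrightarrow> sum (sqmod x) F \<le> l2norm2 x"
  unfolding l2norm2_def by (intro finite_sum_le_infsum) (auto simp: l2_iff_summable)

lemma L2_set_le_l2norm: "x \<in> l2 \<Longrightarrow> finite F \<Longrightarrow> L2_set (\<lambda>i. cmod (x i)) F \<le> l2norm x"
  by (simp add: L2_set_cmod_eq l2norm_eq_sqrt sum_sqmod_le_l2norm2)

lemma l2_if_L2_set_bounded: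
  assumes "\<And>F. finite F \<Longrightarrow> L2_set (\<lambda>i. cmod (x i)) F \<le> B"
  shows "x \<in> l2" "l2norm x \<le> B"
proof -
  have "0 \<le> B" using assms[of "{}"] by simp
  then have sums: "sum (sqmod x) F \<le> B\<^sup>2" if "finite F" for F
    using assms[OF that] by (simp add: L2_set_cmod_eq real_sqrt_le_iff real_sqrt_le_mono sqrt_le_D)
  then have summable: "sqmod x summable_on UNIV"
    by (intro nonneg_bdd_above_summable_on bdd_aboveI) auto
  then show "x \<in> l2" by (simp add: l2_iff_summable)
  have "l2norm2 x \<le> B\<^sup>2"
    unfolding l2norm2_def by (rule infsum_le_finite_sums) (use sums summable in auto)
  then show "l2norm x \<le> B"
    using \<open>0 \<le> B\<close> real_sqrt_le_mono[of "l2norm2 x" "B\<^sup>2"] by (simp add: l2norm_eq_sqrt)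
qed

lemma l2_finite_support:
  assumes "finite S" "supported_in x S"
  shows "x \<in> l2" "l2norm2 x = sum (sqmod x) S"
proof -
  have restrict: "sum (sqmod x) F = sum (sqmod x) (F \<inter> S)" if "finite F" for F
    using that assms by (intro sum.mono_neutral_right) (auto simp: supported_in_def sqmod_def)
  have "L2_set (\<lambda>i. cmod (x i)) F \<le> sqrt (sum (sqmod x) S)" if "finite F" for F
    unfolding L2_set_cmod_eq restrict[OF that] using assms by (intro real_sqrt_le_mono sum_mono2) auto
  from l2_if_L2_set_bounded[OF this] show "x \<in> l2" "l2norm2 x = sum (sqmod x) S"
    using sum_sqmod_le_l2norm2[OF _ assms(1)]
    by (auto simp: l2norm_eq_sqrt l2norm2_nonneg intro!: antisym)
qed

lemma l2_add:
  assumes "x \<in> l2" "y \<in> l2"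
  shows "(\<lambda>i. x i + y i) \<in> l2" "l2norm (\<lambda>i. x i + y i) \<le> l2norm x + l2norm y"
proof -
  have bound: "L2_set (\<lambda>i. cmod (x i + y i)) F \<le> l2norm x + l2norm y" if "finite F" for F
  proof -
    have "L2_set (\<lambda>i. cmod (x i + y i)) F \<le> L2_set (\<lambda>i. cmod (x i) + cmod (y i)) F"
      by (intro L2_set_mono norm_triangle_ineq) auto
    also have "\<dots> \<le> L2_set (\<lambda>i. cmod (x i)) F + L2_set (\<lambda>i. cmod (y i)) F"
      by (rule L2_set_triangle_ineq)
    also have "\<dots> \<le> l2norm x + l2norm y"
      using assms that by (intro add_mono L2_set_le_l2norm)
    finally show ?thesis .
  qed
  show "(\<lambda>i. x i + y i) \<in> l2" "l2norm (\<lambda>i. x i + y i) \<le> l2norm x + l2norm y"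
    using l2_if_L2_set_bounded[of "\<lambda>i. x i + y i", OF bound] by auto
qed

lemma l2_scale:
  assumes "x \<in> l2"
  shows "(\<lambda>i. c * x i) \<in> l2" "l2norm2 (\<lambda>i. c * x i) = (cmod c)\<^sup>2 * l2norm2 x"
    "l2norm (\<lambda>i. c * x i) = cmod c * l2norm x"
proof -
  have sqmod_scale: "sqmod (\<lambda>i. c * x i) = (\<lambda>i. (cmod c)\<^sup>2 * sqmod x i)"
    by (auto simp: sqmod_def norm_mult power_mult_distrib)
  have "sqmod x summable_on UNIV" using assms by (simp add: l2_iff_summable)
  then show "(\<lambda>i. c * x i) \<in> l2" "l2norm2 (\<lambda>i. c * x i) = (cmod c)\<^sup>2 * l2norm2 x"
    unfolding l2_iff_summable l2norm2_def sqmod_scale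
    by (auto intro: summable_on_cmult_right infsum_cmult_right)
  then show "l2norm (\<lambda>i. c * x i) = cmod c * l2norm x"
    by (simp add: l2norm_eq_sqrt real_sqrt_mult)
qed

lemma l2_diff: "x \<in> l2 \<Longrightarrow> y \<in> l2 \<Longrightarrow> (\<lambda>i. x i - y i) \<in> l2"
  using l2_add(1)[of x "\<lambda>i. -1 * y i"] l2_scale(1)[of y "-1"] by simp

lemma l2norm_diff_commute: "l2norm (\<lambda>i. x i - y i) = l2norm (\<lambda>i. y i - x i)"
  by (simp add: l2norm_def norm_minus_commute)

lemma l2norm_reverse_triangle:
  assumes "x \<in> l2" "y \<in> l2"
  shows "\<bar>l2norm x - l2norm y\<bar> \<le> l2norm (\<lambda>i. x i - y i)"
  using l2_add(2)[OF l2_diff[OF assms] assms(2)] l2_add(2)[OF l2_diff[OF assms(2,1)] assms(1)]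
    l2norm_diff_commute[of x y] by simp

lemma cmod_le_l2norm: "x \<in> l2 \<Longrightarrow> cmod (x i) \<le> l2norm x"
  using L2_set_le_l2norm[of x "{i}"] by simp

lemma l2norm_eq_0_iff: "x \<in> l2 \<Longrightarrow> l2norm x = 0 \<longleftrightarrow> x = (\<lambda>i. 0)"
  using cmod_le_l2norm[of x] by (force simp: l2norm_def)

lemma cmod_sum_mult_cnj_le:
  assumes "x \<in> l2" "y \<in> l2" "finite F"
  shows "cmod (\<Sum>i\<in>F. x i * cnj (y i)) \<le> l2norm x * l2norm y"
proof -
  have "cmod (\<Sum>i\<in>F. x i * cnj (y i)) \<le> (\<Sum>i\<in>F. \<bar>cmod (x i)\<bar> * \<bar>cmod (y i)\<bar>)"
    by (rule order.trans[OF norm_sum]) (simp add: norm_mult)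
  also have "\<dots> \<le> L2_set (\<lambda>i. cmod (x i)) F * L2_set (\<lambda>i. cmod (y i)) F"
    by (rule L2_set_mult_ineq)
  also have "\<dots> \<le> l2norm x * l2norm y"
    using assms by (intro mult_mono L2_set_le_l2norm) (auto simp: L2_set_nonneg l2norm_nonneg)
  finally show ?thesis .
qed

lemma l2norm2_add_disjoint:
  assumes "finite Ms" "\<And>m. m \<in> Ms \<Longrightarrow> finite (W m)" "\<And>m. m \<in> Ms \<Longrightarrow> supported_in (u m) (W m)"
    "\<And>l m. l \<in> Ms \<Longrightarrow> m \<in> Ms \<Longrightarrow> l \<noteq> m \<Longrightarrow> W l \<inter> W m = {}"
  shows "l2norm2 (\<lambda>i. \<Sum>m\<in>Ms. u m i) = (\<Sum>m\<in>Ms. l2norm2 (u m))"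
proof -
  let ?U = "\<Union>m\<in>Ms. W m"
  let ?z = "\<lambda>i. \<Sum>m\<in>Ms. u m i"
  have supp: "supported_in ?z ?U"
    using assms(3) by (auto simp: supported_in_def intro!: sum.neutral)
  have on_piece: "?z i = u m i" if "m \<in> Ms" "i \<in> W m" for m i
  proof -
    have "(\<Sum>l\<in>Ms - {m}. u l i) = 0"
      using assms(3,4) that by (intro sum.neutral) (force simp: supported_in_def)
    then show ?thesis using assms(1) that(1) by (simp add: sum.remove)
  qed
  have "l2norm2 ?z = sum (sqmod ?z) ?U"
    using assms(1,2) supp by (intro l2_finite_support) auto
  also have "\<dots> = (\<Sum>m\<in>Ms. sum (sqmod ?z) (W m))"
    using assms(1,2,4) by (intro sum.UNION_disjoint) auto
  also have "\<dots> = (\<Sum>m\<in>Ms. l2norm2 (u m))"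
  proof (rule sum.cong[OF refl])
    fix m assume "m \<in> Ms"
    then have "l2norm2 (u m) = sum (sqmod (u m)) (W m)"
      by (intro l2_finite_support(2) assms(2,3))
    then show "sum (sqmod ?z) (W m) = l2norm2 (u m)"
      using \<open>m \<in> Ms\<close> by (simp add: sqmod_def on_piece)
  qed
  finally show ?thesis .
qed

lemma l2norm2_disjoint_combination:
  assumes "finite Ms" "\<And>m. m \<in> Ms \<Longrightarrow> finite (W m)" "\<And>m. m \<in> Ms \<Longrightarrow> supported_in (u m) (W m)"
    "\<And>l m. l \<in> Ms \<Longrightarrow> m \<in> Ms \<Longrightarrow> l \<noteq> m \<Longrightarrow> W l \<inter> W m = {}" "\<And>m. m \<in> Ms \<Longrightarrow> u m \<in> l2"
  shows "l2norm2 (\<lambda>i. \<Sum>m\<in>Ms. c m * u m i) = (\<Sum>m\<in>Ms. (cmod (c m))\<^sup>2 * l2norm2 (u m))"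
proof -
  have "l2norm2 (\<lambda>i. \<Sum>m\<in>Ms. c m * u m i) = (\<Sum>m\<in>Ms. l2norm2 (\<lambda>i. c m * u m i))"
    using assms(3) by (intro l2norm2_add_disjoint[OF assms(1,2) _ assms(4)]) (auto simp: supported_in_def)
  also have "\<dots> = (\<Sum>m\<in>Ms. (cmod (c m))\<^sup>2 * l2norm2 (u m))"
    using assms(5) by (simp add: l2_scale(2))
  finally show ?thesis .
qed

definition cutoff :: "int set \<Rightarrow> (int \<Rightarrow> complex) \<Rightarrow> int \<Rightarrow> complex" where
  "cutoff F x = (\<lambda>i. if i \<in> F then x i else 0)"

lemma supported_in_cutoff: "supported_in (cutoff F x) F"
  by (simp add: supported_in_def cutoff_def)

lemma cutoff_approx:
  assumes "x \<in> l2" "e > 0"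
  obtains F where "finite F" "l2norm (\<lambda>i. x i - cutoff F x i) \<le> e"
proof -
  obtain F where F: "finite F" "dist (sum (sqmod x) F) (l2norm2 x) \<le> e\<^sup>2"
    using infsum_finite_approximation[of "sqmod x" UNIV "e\<^sup>2"] assms
    by (auto simp: l2_iff_summable l2norm2_def)
  have "L2_set (\<lambda>i. cmod (x i - cutoff F x i)) H \<le> e" if "finite H" for H
  proof -
    have "sum (sqmod (\<lambda>i. x i - cutoff F x i)) H = sum (sqmod x) (H - F)"
      using that by (intro sum.mono_neutral_cong_right) (auto simp: sqmod_def cutoff_def)
    also have "\<dots> = sum (sqmod x) ((H - F) \<union> F) - sum (sqmod x) F"
      using that F(1) by (subst sum.union_disjoint) auto
    also have "\<dots> \<le> e\<^sup>2"
      using sum_sqmod_le_l2norm2[OF assms(1), of "(H - F) \<union> F"] that F by (simp add: dist_real_def)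
    finally have "sum (sqmod (\<lambda>i. x i - cutoff F x i)) H \<le> e\<^sup>2" .
    then show ?thesis
      using assms(2) real_sqrt_le_mono[of _ "e\<^sup>2"] by (simp add: L2_set_cmod_eq)
  qed
  then have "l2norm (\<lambda>i. x i - cutoff F x i) \<le> e"
    by (rule l2_if_L2_set_bounded(2))
  then show ?thesis using that F(1) by blast
qed

lemma l2_pointwise_limit:
  assumes "\<And>i. (\<lambda>m. f m i) \<longlonglongrightarrow> g i"
    and "\<And>m. m \<ge> N \<Longrightarrow> f m \<in> l2" "\<And>m. m \<ge> N \<Longrightarrow> l2norm (f m) \<le> e"
  shows "g \<in> l2" "l2norm g \<le> e"
proof -
  have "L2_set (\<lambda>i. cmod (g i)) F \<le> e" if "finite F" for F
  proof (rule LIMSEQ_le_const2)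
    show "(\<lambda>m. L2_set (\<lambda>i. cmod (f m i)) F) \<longlonglongrightarrow> L2_set (\<lambda>i. cmod (g i)) F"
      unfolding L2_set_def by (intro tendsto_intros assms(1))
    have "L2_set (\<lambda>i. cmod (f m i)) F \<le> e" if "m \<ge> N" for m
      using L2_set_le_l2norm[OF assms(2)[OF that] \<open>finite F\<close>] assms(3)[OF that] by linarith
    then show "\<exists>N. \<forall>m\<ge>N. L2_set (\<lambda>i. cmod (f m i)) F \<le> e" by blast
  qed
  from l2_if_L2_set_bounded[OF this] show "g \<in> l2" "l2norm g \<le> e" by auto
qed

lemma l2_disjoint_series:
  assumes W: "\<And>m. finite (W m)" "\<And>l m. l \<noteq> m \<Longrightarrow> W l \<inter> W m = {}"
    and V: "\<And>m. supported_in (V m) (W m)" "\<And>m. V m \<in> l2" "\<And>m. l2norm (V m) = 1"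
  shows "(\<lambda>i. \<Sum>m\<in>{m. i \<in> W m}. of_real ((1 / 2) ^ m) * V m i) \<in> l2"
proof (rule l2_pointwise_limit(1))
  let ?Z = "\<lambda>N i. \<Sum>m<N. of_real ((1 / 2) ^ m) * V m i"
  fix i
  have "finite {m. i \<in> W m}"
    using W(2) by (cases "\<exists>m. i \<in> W m") (auto intro: finite_subset[of _ "{_}"])
  then show "(\<lambda>N. ?Z N i) \<longlonglongrightarrow> (\<Sum>m\<in>{m. i \<in> W m}. of_real ((1 / 2) ^ m) * V m i)"
    unfolding sums_def[symmetric] by (rule sums_finite) (use V(1) in \<open>auto simp: supported_in_def\<close>)
next
  let ?Z = "\<lambda>N i. \<Sum>m<N. of_real ((1 / 2) ^ m) * V m i"
  fix N
  have "l2norm2 (?Z N) = (\<Sum>m<N. (1 / 4) ^ m)"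
    using W V by (subst l2norm2_disjoint_combination[where W = W])
      (auto simp: norm_power norm_divide l2norm_eq_sqrt power2_eq_square simp flip: power_mult_distrib)
  also have "\<dots> \<le> (\<Sum>m. (1 / 4 :: real) ^ m)"
    by (rule sum_le_suminf[OF summable_geometric]) auto
  also have "\<dots> = 4 / 3" by (subst suminf_geometric) auto
  finally show "l2norm (?Z N) \<le> sqrt (4 / 3)" by (simp add: l2norm_eq_sqrt)
  show "?Z N \<in> l2" using W V by (auto intro!: l2_finite_support(1)[of "\<Union>m<N. W m"] simp: supported_in_def)
qed

lemma l2_Cauchy_pointwise:
  fixes X :: "nat \<Rightarrow> int \<Rightarrow> complex"
  assumes X: "\<And>n. X n \<in> l2"
    and Cauchy: "\<And>e. e > 0 \<Longrightarrow> \<exists>N. \<forall>m\<ge>N. \<forall>n\<ge>N. l2norm (\<lambda>i. X m i - X n i) \<le> e"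
  shows "Cauchy (\<lambda>n. X n i)"
proof (rule metric_CauchyI)
  fix e :: real assume "e > 0"
  then obtain N where N: "\<forall>m\<ge>N. \<forall>n\<ge>N. l2norm (\<lambda>i. X m i - X n i) \<le> e / 2"
    using Cauchy[of "e / 2"] by auto
  have "dist (X m i) (X n i) < e" if "m \<ge> N" "n \<ge> N" for m n
  proof -
    have "cmod (X m i - X n i) \<le> l2norm (\<lambda>i. X m i - X n i)"
      using cmod_le_l2norm[OF l2_diff[OF X X]] by simp
    also have "\<dots> \<le> e / 2" using N that by blast
    finally show ?thesis using \<open>e > 0\<close> by (simp add: dist_norm)
  qed
  then show "\<exists>M. \<forall>m\<ge>M. \<forall>n\<ge>M. dist (X m i) (X n i) < e" by blast
qed

lemma l2_complete:
  fixes X :: "nat \<Rightarrow> int \<Rightarrow> complex"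
  assumes X: "\<And>n. X n \<in> l2"
    and Cauchy: "\<And>e. e > 0 \<Longrightarrow> \<exists>N. \<forall>m\<ge>N. \<forall>n\<ge>N. l2norm (\<lambda>i. X m i - X n i) \<le> e"
  obtains x where "x \<in> l2" "(\<lambda>n. l2norm (\<lambda>i. X n i - x i)) \<longlonglongrightarrow> 0"
proof -
  have "Cauchy (\<lambda>n. X n i)" for i
    using l2_Cauchy_pointwise[OF X Cauchy] .
  then obtain x where lim: "\<And>i. (\<lambda>n. X n i) \<longlonglongrightarrow> x i"
    unfolding Cauchy_convergent_iff convergent_def by metis
  have close: "(\<lambda>i. X n i - x i) \<in> l2 \<and> l2norm (\<lambda>i. X n i - x i) \<le> e"
    if N: "\<forall>m\<ge>N. \<forall>n\<ge>N. l2norm (\<lambda>i. X m i - X n i) \<le> e" and "n \<ge> N" for N n e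
  proof -
    have "(\<lambda>m. X n i - X m i) \<longlonglongrightarrow> X n i - x i" for i by (intro tendsto_intros lim)
    then show ?thesis
      using l2_pointwise_limit[where f = "\<lambda>m i. X n i - X m i" and g = "\<lambda>i. X n i - x i"]
        N \<open>n \<ge> N\<close> l2_diff[OF X X] by blast
  qed
  obtain N1 where "\<forall>m\<ge>N1. \<forall>n\<ge>N1. l2norm (\<lambda>i. X m i - X n i) \<le> 1"
    using Cauchy[of 1] by auto
  then have "x \<in> l2"
    using l2_diff[OF X[of N1], of "\<lambda>i. X N1 i - x i"] close[where N = N1 and n = N1 and e = 1] by simp
  then show ?thesis
  proof (rule that)
    show "(\<lambda>n. l2norm (\<lambda>i. X n i - x i)) \<longlonglongrightarrow> 0"
    proof (rule LIMSEQ_I)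
      fix e :: real assume "e > 0"
      then obtain N where "\<forall>m\<ge>N. \<forall>n\<ge>N. l2norm (\<lambda>i. X m i - X n i) \<le> e / 2"
        using Cauchy[of "e / 2"] by auto
      then have "l2norm (\<lambda>i. X n i - x i) \<le> e / 2" if "n \<ge> N" for n
        using close that by blast
      then have "norm (l2norm (\<lambda>i. X n i - x i) - 0) < e" if "n \<ge> N" for n
        using that \<open>e > 0\<close> by (fastforce simp: l2norm_nonneg)
      then show "\<exists>N. \<forall>n\<ge>N. norm (l2norm (\<lambda>i. X n i - x i) - 0) < e" by blast
    qed
  qed
qed

lemma l2_parallelogram:
  assumes "u \<in> l2" "v \<in> l2"
  shows "l2norm2 (\<lambda>i. u i - v i) + l2norm2 (\<lambda>i. u i + v i) = 2 * l2norm2 u + 2 * l2norm2 v"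
proof -
  have pointwise: "sqmod (\<lambda>i. u i - v i) i + sqmod (\<lambda>i. u i + v i) i = 2 * sqmod u i + 2 * sqmod v i" for i
    by (simp only: sqmod_def cmod_power2) (simp add: power2_eq_square algebra_simps)
  have summable: "sqmod (\<lambda>i. u i - v i) summable_on UNIV" "sqmod (\<lambda>i. u i + v i) summable_on UNIV"
    "sqmod u summable_on UNIV" "sqmod v summable_on UNIV"
    using assms l2_diff l2_add(1) by (auto simp: l2_iff_summable)
  have "l2norm2 (\<lambda>i. u i - v i) + l2norm2 (\<lambda>i. u i + v i)
      = (\<Sum>\<^sub>\<infinity>i. sqmod (\<lambda>i. u i - v i) i + sqmod (\<lambda>i. u i + v i) i)"
    unfolding l2norm2_def using summable by (simp add: infsum_add)
  also have "\<dots> = (\<Sum>\<^sub>\<infinity>i. 2 * sqmod u i + 2 * sqmod v i)"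
    by (simp only: pointwise)
  also have "\<dots> = 2 * l2norm2 u + 2 * l2norm2 v"
    unfolding l2norm2_def using summable
    by (simp add: infsum_add summable_on_cmult_right infsum_cmult_right)
  finally show ?thesis .
qed

lemma l2norm2_change_on_finite:
  assumes "u \<in> l2" "finite S" "\<And>j. j \<notin> S \<Longrightarrow> u' j = u j"
  shows "u' \<in> l2" "l2norm2 u' = l2norm2 u + (\<Sum>j\<in>S. sqmod u' j - sqmod u j)"
proof -
  have "supported_in (\<lambda>i. u' i - u i) S" using assms(3) by (simp add: supported_in_def)
  then have "(\<lambda>i. u i + (u' i - u i)) \<in> l2"
    using l2_add(1)[OF assms(1) l2_finite_support(1)[OF assms(2)]] by blast
  then show u': "u' \<in> l2" by simp
  have split: "l2norm2 f = sum (sqmod f) S + infsum (sqmod f) (- S)" if "f \<in> l2" for f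
  proof -
    have "l2norm2 f = infsum (sqmod f) (S \<union> - S)" by (simp add: l2norm2_def)
    also have "\<dots> = infsum (sqmod f) S + infsum (sqmod f) (- S)"
      using that by (intro infsum_Un_disjoint) (auto intro: summable_on_subset_banach simp: l2_iff_summable)
    finally show ?thesis using assms(2) by simp
  qed
  have "infsum (sqmod u') (- S) = infsum (sqmod u) (- S)"
    by (rule infsum_cong) (simp add: sqmod_def assms(3))
  then show "l2norm2 u' = l2norm2 u + (\<Sum>j\<in>S. sqmod u' j - sqmod u j)"
    using split[OF assms(1)] split[OF u'] by (simp add: sum_subtractf)
qed

section \<open>Band operators\<close>

lemma band_op_entry_zero: "band_op a w \<Longrightarrow> int w < \<bar>i - j\<bar> \<Longrightarrow> a i j = 0"
  by (simp add: band_op_def)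

lemma band_op_nonzero_near:
  assumes "band_op a w" "a i j \<noteq> 0" shows "j \<in> {i - int w..i + int w}"
proof (rule ccontr)
  assume "j \<notin> {i - int w..i + int w}"
  then have "int w < \<bar>i - j\<bar>" by auto
  then show False using assms band_op_entry_zero by blast
qed

lemma band_op_adjoint:
  assumes "band_op a w" shows "band_op (adjoint_op a) w"
proof -
  obtain C where "\<And>i j. cmod (a i j) \<le> C" using assms unfolding band_op_def by blast
  then have "\<forall>i j. cmod (adjoint_op a i j) \<le> C" by (simp add: adjoint_op_def)
  moreover have "\<forall>i j. int w < \<bar>i - j\<bar> \<longrightarrow> adjoint_op a i j = 0"
    using band_op_entry_zero[OF assms] by (simp add: adjoint_op_def abs_minus_commute)
  ultimately show ?thesis unfolding band_op_def by blast
qed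

lemma adjoint_adjoint [simp]: "adjoint_op (adjoint_op a) = a"
  by (simp add: adjoint_op_def)

lemma op_apply_eq_sum:
  assumes "band_op a w" "finite T" "\<And>j. j \<notin> T \<Longrightarrow> a i j * x j = 0"
  shows "op_apply a x i = (\<Sum>j\<in>T. a i j * x j)"
proof -
  let ?U = "{j. a i j \<noteq> 0} \<union> T"
  have "{j. a i j \<noteq> 0} \<subseteq> {i - int w..i + int w}"
    using band_op_nonzero_near[OF assms(1)] by blast
  then have "finite ?U"
    using assms(2) finite_subset by auto
  then have "op_apply a x i = (\<Sum>j\<in>?U. a i j * x j)"
    unfolding op_apply_def by (intro sum.mono_neutral_left) auto
  also have "\<dots> = (\<Sum>j\<in>T. a i j * x j)"
    using \<open>finite ?U\<close> assms(3) by (intro sum.mono_neutral_right) auto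
  finally show ?thesis .
qed

lemma op_apply_band_sum:
  assumes "band_op a w" shows "op_apply a x i = (\<Sum>j\<in>{i - int w..i + int w}. a i j * x j)"
  by (rule op_apply_eq_sum[OF assms]) (auto intro: band_op_entry_zero[OF assms])

lemma op_apply_add: "op_apply a (\<lambda>i. x i + y i) = (\<lambda>i. op_apply a x i + op_apply a y i)"
  by (auto simp: op_apply_def algebra_simps sum.distrib)

lemma op_apply_scale: "op_apply a (\<lambda>i. c * x i) = (\<lambda>i. c * op_apply a x i)"
  by (auto simp: op_apply_def algebra_simps sum_distrib_left)

lemma op_apply_diff: "op_apply a (\<lambda>i. x i - y i) = (\<lambda>i. op_apply a x i - op_apply a y i)"
  by (auto simp: op_apply_def algebra_simps sum_subtractf)

lemma op_apply_sum: "op_apply a (\<lambda>i. \<Sum>m\<in>M. f m i) = (\<lambda>i. \<Sum>m\<in>M. op_apply a (f m) i)"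
  by (auto simp: op_apply_def sum_distrib_left intro!: ext sum.swap)

lemma L2_set_sum_le:
  "finite D \<Longrightarrow> L2_set (\<lambda>i. \<Sum>d\<in>D. f d i) F \<le> (\<Sum>d\<in>D. L2_set (f d) F)"
proof (induction D rule: finite_induct)
  case (insert d D)
  have "L2_set (\<lambda>i. \<Sum>d\<in>insert d D. f d i) F \<le> L2_set (f d) F + L2_set (\<lambda>i. \<Sum>d\<in>D. f d i) F"
    using insert.hyps L2_set_triangle_ineq[of "f d"] by simp
  then show ?case using insert by simp
qed (simp add: L2_set_def)

lemma band_op_bounded:
  assumes "band_op a w"
  obtains K where "K \<ge> 0" "\<And>x. x \<in> l2 \<Longrightarrow> op_apply a x \<in> l2"
    "\<And>x. x \<in> l2 \<Longrightarrow> l2norm (op_apply a x) \<le> K * l2norm x"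
proof -
  obtain C where C: "\<And>i j. cmod (a i j) \<le> C"
    using assms unfolding band_op_def by blast
  have "C \<ge> 0" by (meson C norm_ge_zero order.trans)
  let ?D = "{- int w..int w}"
  have bound: "L2_set (\<lambda>i. cmod (op_apply a x i)) F \<le> (\<Sum>d\<in>?D. C * l2norm x)"
    if x: "x \<in> l2" and F: "finite F" for x F
  proof -
    have diagonals: "op_apply a x i = (\<Sum>d\<in>?D. a i (i + d) * x (i + d))" for i
      unfolding op_apply_band_sum[OF assms]
      by (rule sum.reindex_bij_witness[of _ "\<lambda>d. i + d" "\<lambda>j. j - i"]) auto
    have "L2_set (\<lambda>i. cmod (op_apply a x i)) F
        \<le> L2_set (\<lambda>i. \<Sum>d\<in>?D. cmod (a i (i + d) * x (i + d))) F"
      unfolding diagonals by (intro L2_set_mono norm_sum) auto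
    also have "\<dots> \<le> (\<Sum>d\<in>?D. L2_set (\<lambda>i. cmod (a i (i + d) * x (i + d))) F)"
      by (rule L2_set_sum_le) simp
    also have "\<dots> \<le> (\<Sum>d\<in>?D. C * l2norm x)"
    proof (rule sum_mono)
      fix d
      have "L2_set (\<lambda>i. cmod (a i (i + d) * x (i + d))) F \<le> L2_set (\<lambda>i. C * cmod (x (i + d))) F"
        by (intro L2_set_mono) (auto simp: norm_mult intro!: mult_right_mono C)
      also have "\<dots> = C * L2_set (\<lambda>i. cmod (x (i + d))) F"
        using \<open>C \<ge> 0\<close> by (rule L2_set_right_distrib[symmetric])
      also have "\<dots> = C * L2_set (\<lambda>i. cmod (x i)) ((\<lambda>i. i + d) ` F)"
        by (simp add: L2_set_def sum.reindex)
      also have "\<dots> \<le> C * l2norm x"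
        using \<open>C \<ge> 0\<close> x F by (intro mult_left_mono L2_set_le_l2norm) auto
      finally show "L2_set (\<lambda>i. cmod (a i (i + d) * x (i + d))) F \<le> C * l2norm x" .
    qed
    finally show ?thesis .
  qed
  show ?thesis
  proof (rule that)
    show "real (2 * w + 1) * C \<ge> 0" using \<open>C \<ge> 0\<close> by simp
    fix x assume "x \<in> l2"
    from l2_if_L2_set_bounded[OF bound[OF this]]
    show "op_apply a x \<in> l2" "l2norm (op_apply a x) \<le> real (2 * w + 1) * C * l2norm x"
      by (auto simp: mult.assoc add.commute)
  qed
qed

lemma op_apply_l2: "band_op a w \<Longrightarrow> x \<in> l2 \<Longrightarrow> op_apply a x \<in> l2"
  using band_op_bounded by blast

lemma supported_in_op_apply:
  assumes "band_op a w" "supported_in x {- int M..int M}"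
  shows "supported_in (op_apply a x) {- int (M + w)..int (M + w)}"
  unfolding supported_in_def
proof (intro allI impI)
  fix i assume i: "i \<notin> {- int (M + w)..int (M + w)}"
  have "op_apply a x i = (\<Sum>j\<in>{- int M..int M}. a i j * x j)"
    by (rule op_apply_eq_sum[OF assms(1)]) (use assms(2) in \<open>auto simp: supported_in_def\<close>)
  also have "\<dots> = 0"
    using i by (intro sum.neutral) (auto intro!: band_op_entry_zero[OF assms(1)])
  finally show "op_apply a x i = 0" .
qed

text \<open>No summability of \<open>x\<close> is needed: only the band around the support of \<open>v\<close> enters.\<close>

lemma op_apply_adjoint_pairing:
  assumes "band_op a w" "finite T" "supported_in v T"
  obtains S where "finite S"
    "(\<Sum>i\<in>T. op_apply a x i * cnj (v i)) = (\<Sum>j\<in>S. x j * cnj (op_apply (adjoint_op a) v j))"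
proof -
  define S where "S = (\<Union>i\<in>T. {i - int w..i + int w})"
  have "finite S" using assms(2) by (simp add: S_def)
  have Ax: "op_apply a x i = (\<Sum>j\<in>S. a i j * x j)" if "i \<in> T" for i
  proof (rule op_apply_eq_sum[OF assms(1) \<open>finite S\<close>])
    fix j assume "j \<notin> S"
    then have "int w < \<bar>i - j\<bar>" using that by (auto simp: S_def)
    then show "a i j * x j = 0" by (simp add: band_op_entry_zero[OF assms(1)])
  qed
  have A'v: "op_apply (adjoint_op a) v j = (\<Sum>i\<in>T. cnj (a i j) * v i)" for j
    using op_apply_eq_sum[OF band_op_adjoint[OF assms(1)] assms(2), where x = v and i = j] assms(3)
    by (simp add: supported_in_def adjoint_op_def)
  have "(\<Sum>i\<in>T. op_apply a x i * cnj (v i)) = (\<Sum>i\<in>T. \<Sum>j\<in>S. a i j * x j * cnj (v i))"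
    by (simp add: Ax sum_distrib_right)
  also have "\<dots> = (\<Sum>j\<in>S. \<Sum>i\<in>T. a i j * x j * cnj (v i))"
    by (rule sum.swap)
  also have "\<dots> = (\<Sum>j\<in>S. x j * cnj (op_apply (adjoint_op a) v j))"
    by (simp add: A'v cnj_sum sum_distrib_left mult_ac)
  finally show ?thesis using that \<open>finite S\<close> by blast
qed

lemma cmod_pairing_le:
  assumes "band_op a w" "finite T" "supported_in v T" "x \<in> l2"
  shows "cmod (\<Sum>i\<in>T. op_apply a x i * cnj (v i)) \<le> l2norm x * l2norm (op_apply (adjoint_op a) v)"
proof -
  obtain S where "finite S"
    and eq: "(\<Sum>i\<in>T. op_apply a x i * cnj (v i)) = (\<Sum>j\<in>S. x j * cnj (op_apply (adjoint_op a) v j))"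
    using op_apply_adjoint_pairing[OF assms(1-3)] .
  have "op_apply (adjoint_op a) v \<in> l2"
    using l2_finite_support(1)[OF assms(2,3)] by (rule op_apply_l2[OF band_op_adjoint[OF assms(1)]])
  then show ?thesis
    unfolding eq by (rule cmod_sum_mult_cnj_le[OF assms(4) _ \<open>finite S\<close>])
qed

definition shift :: "int \<Rightarrow> (int \<Rightarrow> complex) \<Rightarrow> int \<Rightarrow> complex" where
  "shift k x = (\<lambda>i. x (i - k))"

lemma shift_apply: "shift k x i = x (i - k)"
  by (simp add: shift_def)

lemma supported_in_shift:
  "supported_in x {- int M..int M} \<Longrightarrow> supported_in (shift k x) {k - int M..k + int M}"
  by (auto simp: supported_in_def shift_def)

lemma l2norm2_shift: "l2norm2 (shift k x) = l2norm2 x"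
proof -
  have "bij_betw (\<lambda>i. i - k) UNIV UNIV"
    by (rule bij_betwI[of _ _ _ "\<lambda>i. i + k"]) auto
  then show ?thesis
    unfolding l2norm2_def shift_def sqmod_def by (rule infsum_reindex_bij_betw)
qed

definition delta :: "int \<Rightarrow> int \<Rightarrow> complex" where
  "delta k = (\<lambda>i. if i = k then 1 else 0)"

lemma supported_in_delta: "supported_in (delta k) {k}"
  by (simp add: supported_in_def delta_def)

lemma delta_l2: "delta k \<in> l2"
  using l2_finite_support(1)[OF _ supported_in_delta] by simp

lemma l2norm_delta: "l2norm (delta k) = 1"
  using l2_finite_support(2)[OF _ supported_in_delta, of k]
  by (simp add: l2norm_eq_sqrt sqmod_def delta_def)

lemma op_apply_delta: "band_op a w \<Longrightarrow> op_apply a (delta k) = (\<lambda>i. a i k)"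
  by (rule ext, subst op_apply_eq_sum[of a w "{k}"]) (auto simp: delta_def)

lemma l2_normalize:
  assumes "band_op a w" "x \<in> l2" "l2norm x > 0"
  defines "u \<equiv> (\<lambda>i. of_real (1 / l2norm x) * x i)"
  shows "u \<in> l2" "l2norm u = 1" "l2norm (op_apply a u) = l2norm (op_apply a x) / l2norm x"
proof -
  have c: "cmod (of_real (1 / l2norm x)) = 1 / l2norm x" using assms(3) by (simp add: norm_divide)
  show "u \<in> l2" unfolding u_def by (rule l2_scale(1)[OF assms(2)])
  show "l2norm u = 1" unfolding u_def l2_scale(3)[OF assms(2)] c using assms(3) by simp
  show "l2norm (op_apply a u) = l2norm (op_apply a x) / l2norm x"
    unfolding u_def op_apply_scale l2_scale(3)[OF op_apply_l2[OF assms(1,2)]] c by simp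
qed

section \<open>The lower norm and its finite-support versions\<close>

lemma nu_le: "x \<in> l2 \<Longrightarrow> l2norm x = 1 \<Longrightarrow> nu a \<le> l2norm (op_apply a x)"
  unfolding nu_def by (rule cInf_lower) (auto intro: bdd_belowI[of _ 0] simp: l2norm_nonneg)

lemma nu_greatest:
  "(\<And>x. x \<in> l2 \<Longrightarrow> l2norm x = 1 \<Longrightarrow> c \<le> l2norm (op_apply a x)) \<Longrightarrow> c \<le> nu a"
  unfolding nu_def by (rule cInf_greatest) (use delta_l2 l2norm_delta in blast)+

lemma nu_nonneg: "0 \<le> nu a"
  by (rule nu_greatest) (simp add: l2norm_nonneg)

lemma nu_approx:
  assumes "e > 0"
  obtains x where "x \<in> l2" "l2norm x = 1" "l2norm (op_apply a x) < nu a + e"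
proof -
  have "Inf {l2norm (op_apply a x) |x. x \<in> l2 \<and> l2norm x = 1} < nu a + e"
    using assms by (simp add: nu_def)
  then show ?thesis
    using that delta_l2 l2norm_delta by (subst (asm) cInf_less_iff) (auto intro: bdd_belowI[of _ 0] simp: l2norm_nonneg)
qed

lemma nu_mult_l2norm_le:
  assumes "band_op a w" "x \<in> l2"
  shows "nu a * l2norm x \<le> l2norm (op_apply a x)"
proof (cases "l2norm x = 0")
  case True then show ?thesis by (simp add: l2norm_nonneg)
next
  case False
  then have "l2norm x > 0" using l2norm_nonneg[of x] by linarith
  then have "nu a \<le> l2norm (op_apply a x) / l2norm x"
    using l2_normalize[OF assms] nu_le by metis
  then show ?thesis using \<open>l2norm x > 0\<close> by (simp add: field_simps)
qed

lemma finite_subset_symmetric_interval: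
  assumes "finite (F :: int set)" obtains M :: nat where "F \<subseteq> {- int M..int M}"
proof -
  obtain k where "abs ` F \<subseteq> {..k}" using assms finite_int_iff_bounded_le by blast
  then have "F \<subseteq> {- int (nat k)..int (nat k)}" by force
  then show ?thesis using that by blast
qed

text \<open>Cut \<open>x\<close> off where its tail has norm \<open>d\<close> and renormalize: the value \<open>\<parallel>A u\<parallel>\<close> grows at most
  to \<open>(t + K d) / (1 - d)\<close>, which tends to \<open>t = \<parallel>A x\<parallel>\<close> as \<open>d \<rightarrow> 0\<close>.\<close>

lemma finite_support_approx:
  assumes band: "band_op a w" and x: "x \<in> l2" "l2norm x = 1" and "e > 0"
  obtains u M where "supported_in u {- int M..int M}" "u \<in> l2" "l2norm u = 1"
    "l2norm (op_apply a u) < l2norm (op_apply a x) + e"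
proof -
  obtain K where K: "K \<ge> 0" "\<And>x. x \<in> l2 \<Longrightarrow> l2norm (op_apply a x) \<le> K * l2norm x"
    using band_op_bounded[OF band] by metis
  define t where "t = l2norm (op_apply a x)"
  have "((\<lambda>d. (t + K * d) / (1 - d)) \<longlongrightarrow> (t + K * 0) / (1 - 0)) (at_right 0)"
    by (intro tendsto_intros tendsto_ident_at) simp
  moreover have "(t + K * 0) / (1 - 0) < t + e" using \<open>e > 0\<close> by simp
  ultimately have "\<forall>\<^sub>F d in at_right 0. (t + K * d) / (1 - d) < t + e"
    by (rule order_tendstoD(2))
  then obtain b where "b > 0" and b: "\<And>d. 0 < d \<Longrightarrow> d < b \<Longrightarrow> (t + K * d) / (1 - d) < t + e"
    unfolding eventually_at_right_field by auto
  define d where "d = min (b / 2) (1 / 2)"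
  have d: "0 < d" "d < b" "d \<le> 1 / 2" using \<open>b > 0\<close> by (auto simp: d_def)
  obtain F where "finite F" and F: "l2norm (\<lambda>i. x i - cutoff F x i) \<le> d"
    using cutoff_approx[OF x(1) \<open>0 < d\<close>] by blast
  obtain M where M: "F \<subseteq> {- int M..int M}"
    using finite_subset_symmetric_interval[OF \<open>finite F\<close>] by blast
  let ?v = "cutoff F x"
  have v: "?v \<in> l2" using l2_finite_support(1)[OF \<open>finite F\<close> supported_in_cutoff] .
  have "1 - d \<le> l2norm ?v" using l2norm_reverse_triangle[OF x(1) v] x(2) F by linarith
  then have v_pos: "l2norm ?v > 0" using d by linarith
  have "l2norm (op_apply a ?v) - t \<le> l2norm (op_apply a (\<lambda>i. ?v i - x i))"
    using l2norm_reverse_triangle[OF op_apply_l2[OF band v] op_apply_l2[OF band x(1)]]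
    by (simp add: t_def op_apply_diff)
  also have "\<dots> \<le> K * d"
    using K(2)[OF l2_diff[OF v x(1)]] F K(1) l2norm_diff_commute[of ?v x]
    by (metis mult_left_mono order.trans)
  finally have "l2norm (op_apply a ?v) / l2norm ?v \<le> (t + K * d) / (1 - d)"
    using \<open>1 - d \<le> l2norm ?v\<close> d K(1) by (intro frac_le) (auto simp: t_def l2norm_nonneg)
  also have "\<dots> < t + e" using b d by blast
  finally show ?thesis
    using l2_normalize[OF band v v_pos] supported_in_cutoff[of F x] M
    by (intro that[of "\<lambda>i. of_real (1 / l2norm ?v) * ?v i" M]) (auto simp: supported_in_def t_def)
qed

lemma nu_approx_finite_support:
  assumes "band_op a w" "e > 0"
  obtains M u where "supported_in u {- int M..int M}" "u \<in> l2" "l2norm u = 1"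
    "l2norm (op_apply a u) < nu a + e"
proof -
  obtain x where x: "x \<in> l2" "l2norm x = 1" "l2norm (op_apply a x) < nu a + e / 2"
    using nu_approx[of "e / 2"] assms(2) by auto
  obtain u M where "supported_in u {- int M..int M}" "u \<in> l2" "l2norm u = 1"
    "l2norm (op_apply a u) < l2norm (op_apply a x) + e / 2"
    using finite_support_approx[OF assms(1) x(1,2), of "e / 2"] assms(2) by auto
  then show ?thesis using that x(3) by force
qed

lemma diam_supp_le:
  assumes "supported_in u {- int M..int M}"
  shows "diam_supp u \<le> ereal (2 * real M)"
proof -
  let ?S = "{i. u i \<noteq> 0}"
  have S: "?S \<subseteq> {- int M..int M}" using assms by (auto simp: supported_in_def)
  then have "finite ?S" by (rule finite_subset) simp
  show ?thesis
  proof (cases "?S = {}")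
    case False
    have "Max ?S \<le> int M" "- int M \<le> Min ?S"
      using S False \<open>finite ?S\<close> Max_in Min_in by fastforce+
    then have "real_of_int (Max ?S - Min ?S) \<le> 2 * real M" by linarith
    then show ?thesis
      using \<open>finite ?S\<close> False by (simp only: diam_supp_def if_True if_False ereal_less_eq(3))
  qed (simp add: diam_supp_def)
qed

lemma nu_N_le:
  "x \<in> l2 \<Longrightarrow> l2norm x = 1 \<Longrightarrow> diam_supp x < ereal (real N) \<Longrightarrow> nu_N a N \<le> l2norm (op_apply a x)"
  unfolding nu_N_def by (rule cInf_lower) (auto intro: bdd_belowI[of _ 0] simp: l2norm_nonneg)

text \<open>Diameters are nonnegative, so the set defining \<open>nu_N a 0\<close> is empty and its infimum is a junk
  value: hence \<open>N \<ge> 1\<close>.\<close>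

lemma nu_N_greatest:
  assumes "N \<ge> 1"
    and "\<And>x. x \<in> l2 \<Longrightarrow> l2norm x = 1 \<Longrightarrow> diam_supp x < ereal (real N) \<Longrightarrow> c \<le> l2norm (op_apply a x)"
  shows "c \<le> nu_N a N"
proof -
  have "diam_supp (delta 0) < ereal (real N)"
    using diam_supp_le[of "delta 0" 0] supported_in_delta[of 0] assms(1) by (simp add: le_less_trans)
  then show ?thesis
    unfolding nu_N_def using delta_l2 l2norm_delta assms(2) by (intro cInf_greatest) blast+
qed

lemma nu_le_nu_N: "N \<ge> 1 \<Longrightarrow> nu a \<le> nu_N a N"
  by (rule nu_N_greatest) (auto intro: nu_le)

lemma nu_N_antimono:
  assumes "1 \<le> N" "N \<le> N'" shows "nu_N a N' \<le> nu_N a N"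
proof (rule nu_N_greatest[OF assms(1)])
  fix x assume x: "x \<in> l2" "l2norm x = 1" "diam_supp x < ereal (real N)"
  have "ereal (real N) \<le> ereal (real N')" using assms(2) by simp
  then have "diam_supp x < ereal (real N')" using x(3) by (rule order.strict_trans2[rotated])
  then show "nu_N a N' \<le> l2norm (op_apply a x)" using x by (intro nu_N_le)
qed

lemma nu_N_tendsto_nu:
  assumes "band_op a w"
  shows "(\<lambda>N. nu_N a N) \<longlonglongrightarrow> nu a"
proof (rule LIMSEQ_I)
  fix r :: real assume "r > 0"
  obtain M u where u: "supported_in u {- int M..int M}" "u \<in> l2" "l2norm u = 1"
    "l2norm (op_apply a u) < nu a + r"
    using nu_approx_finite_support[OF assms \<open>r > 0\<close>] .
  have "norm (nu_N a N - nu a) < r" if "N \<ge> 2 * M + 1" for N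
  proof -
    have "diam_supp u < ereal (real N)"
      using diam_supp_le[OF u(1)] that by (simp add: le_less_trans)
    then have "nu_N a N \<le> l2norm (op_apply a u)" using nu_N_le u(2,3) by blast
    moreover have "nu a \<le> nu_N a N" using that by (intro nu_le_nu_N) simp
    ultimately show ?thesis using u(4) by simp
  qed
  then show "\<exists>N0. \<forall>N\<ge>N0. norm (nu_N a N - nu a) < r" by blast
qed

section \<open>Recurrence and the lower norm of the adjoint\<close>

definition recurs_at :: "(int \<Rightarrow> int \<Rightarrow> complex) \<Rightarrow> int \<Rightarrow> int \<Rightarrow> bool" where
  "recurs_at a R k \<longleftrightarrow> (\<forall>i j. \<bar>i\<bar> \<le> R \<longrightarrow> \<bar>j\<bar> \<le> R \<longrightarrow> a (k + i) (k + j) = a i j)"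

text \<open>Every central window recurs arbitrarily far out: this is all that self-containedness
  contributes to the proof.\<close>

definition recurrent :: "(int \<Rightarrow> int \<Rightarrow> complex) \<Rightarrow> bool" where
  "recurrent a \<longleftrightarrow> (\<forall>R L. \<exists>k. \<bar>k\<bar> > L \<and> recurs_at a R k)"

lemma recurs_at_adjoint: "recurs_at a R k \<Longrightarrow> recurs_at (adjoint_op a) R k"
  by (simp add: recurs_at_def adjoint_op_def)

lemma recurrent_adjoint: "recurrent a \<Longrightarrow> recurrent (adjoint_op a)"
  unfolding recurrent_def using recurs_at_adjoint by blast

lemma self_contained_recurrent:
  assumes "self_contained a w" shows "recurrent a"
  unfolding recurrent_def
proof (intro allI)
  fix R L :: int
  show "\<exists>k. \<bar>k\<bar> > L \<and> recurs_at a R k"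
  proof (cases "R < 0")
    case True
    then have "recurs_at a R (\<bar>L\<bar> + 1)" by (auto simp: recurs_at_def)
    then show ?thesis by (intro exI[of _ "\<bar>L\<bar> + 1"]) auto
  next
    case False
    define N where "N = nat (2 * R + 1)"
    let ?S = "{k'. \<forall>i\<in>{1 - int w..int N + int w}. \<forall>j\<in>{1..int N}.
        a (k' + i) (k' + j) = a (- R - 1 + i) (- R - 1 + j)}"
    have "infinite ?S" using assms unfolding self_contained_def by blast
    then have "infinite ((\<lambda>k'. k' + R + 1) ` ?S)"
      by (subst finite_image_iff) (auto simp: inj_on_def)
    then have "\<not> (\<lambda>k'. k' + R + 1) ` ?S \<subseteq> {-L..L}"
      using finite_subset by blast
    then obtain k' where k': "k' \<in> ?S" "k' + R + 1 \<notin> {-L..L}" by blast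
    have "recurs_at a R (k' + R + 1)" unfolding recurs_at_def
    proof (intro allI impI)
      fix i j :: int assume ij: "\<bar>i\<bar> \<le> R" "\<bar>j\<bar> \<le> R"
      then have "i + R + 1 \<in> {1 - int w..int N + int w}" "j + R + 1 \<in> {1..int N}"
        using False by (auto simp: N_def)
      then have "a (k' + (i + R + 1)) (k' + (j + R + 1)) = a (- R - 1 + (i + R + 1)) (- R - 1 + (j + R + 1))"
        using k'(1) by blast
      then show "a (k' + R + 1 + i) (k' + R + 1 + j) = a i j"
        by (simp add: algebra_simps)
    qed
    moreover have "\<bar>k' + R + 1\<bar> > L" using k'(2) by auto
    ultimately show ?thesis by blast
  qed
qed

lemma recurrent_disjoint_windows:
  fixes R :: "nat \<Rightarrow> int"
  assumes "recurrent a" "\<And>m. R m \<ge> 0"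
  obtains k :: "nat \<Rightarrow> int" where "\<And>m. recurs_at a (R m) (k m)"
    "\<And>l m. l \<noteq> m \<Longrightarrow> {k l - R l..k l + R l} \<inter> {k m - R m..k m + R m} = {}"
proof -
  define g where "g = (\<lambda>R L. SOME k. \<bar>k\<bar> > L \<and> recurs_at a R k)"
  have g: "\<bar>g R L\<bar> > L \<and> recurs_at a R (g R L)" for R L
    unfolding g_def by (rule someI_ex) (use assms(1) in \<open>auto simp: recurrent_def\<close>)
  define k where "k = rec_nat (g (R 0) 0) (\<lambda>m km. g (R (Suc m)) (\<bar>km\<bar> + R m + R (Suc m)))"
  have k_Suc: "k (Suc m) = g (R (Suc m)) (\<bar>k m\<bar> + R m + R (Suc m))" for m
    by (simp add: k_def)
  have recurs: "recurs_at a (R m) (k m)" for m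
    by (cases m) (use g k_Suc in \<open>auto simp: k_def\<close>)
  have far: "\<bar>k l\<bar> + R l + R m < \<bar>k m\<bar>" if "l < m" for l m
    using that
  proof (induction m)
    case (Suc m)
    have step: "\<bar>k m\<bar> + R m + R (Suc m) < \<bar>k (Suc m)\<bar>"
      using g[of "\<bar>k m\<bar> + R m + R (Suc m)" "R (Suc m)"] k_Suc[of m] by simp
    show ?case
    proof (cases "l = m")
      case False
      then have "\<bar>k l\<bar> + R l + R m < \<bar>k m\<bar>" using Suc by simp
      then show ?thesis using step assms(2)[of m] by linarith
    qed (use step assms(2)[of m] in simp)
  qed simp
  have disjoint: "{k l - R l..k l + R l} \<inter> {k m - R m..k m + R m} = {}" if "l < m" for l m
  proof (rule ccontr)
    assume "{k l - R l..k l + R l} \<inter> {k m - R m..k m + R m} \<noteq> {}"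
    then obtain i where "i \<in> {k l - R l..k l + R l}" "i \<in> {k m - R m..k m + R m}" by blast
    then have "\<bar>k m - k l\<bar> \<le> R l + R m" by (simp add: abs_le_iff)
    then show False using far[OF that] by linarith
  qed
  show ?thesis
  proof (rule that[OF recurs])
    fix l m :: nat assume "l \<noteq> m"
    then show "{k l - R l..k l + R l} \<inter> {k m - R m..k m + R m} = {}"
      using disjoint[of l m] disjoint[of m l] by (cases "l < m") (auto simp: Int_commute)
  qed
qed

lemma op_apply_shift:
  assumes "band_op a w" "recurs_at a (int M + int w) k" "supported_in x {- int M..int M}"
  shows "op_apply a (shift k x) = shift k (op_apply a x)"
proof
  fix i
  have shifted: "op_apply a (shift k x) i = (\<Sum>j\<in>{- int M..int M}. a i (k + j) * x j)"
  proof -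
    have "op_apply a (shift k x) i = (\<Sum>j\<in>{k - int M..k + int M}. a i j * x (j - k))"
      using assms(3) by (subst op_apply_eq_sum[OF assms(1)]) (auto simp: supported_in_def shift_def)
    also have "\<dots> = (\<Sum>j\<in>{- int M..int M}. a i (k + j) * x j)"
      by (rule sum.reindex_bij_witness[of _ "\<lambda>j. j + k" "\<lambda>j. j - k"]) (auto simp: algebra_simps)
    finally show ?thesis .
  qed
  have unshifted: "op_apply a x (i - k) = (\<Sum>j\<in>{- int M..int M}. a (i - k) j * x j)"
    using assms(3) by (subst op_apply_eq_sum[OF assms(1)]) (auto simp: supported_in_def)
  show "op_apply a (shift k x) i = shift k (op_apply a x) i"
  proof (cases "\<bar>i - k\<bar> \<le> int M + int w")
    case True
    have "a i (k + j) = a (i - k) j" if "j \<in> {- int M..int M}" for j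
    proof -
      have "\<bar>j\<bar> \<le> int M + int w" using that by auto
      then have "a (k + (i - k)) (k + j) = a (i - k) j"
        using assms(2) True unfolding recurs_at_def by blast
      then show ?thesis by simp
    qed
    then show ?thesis unfolding shifted shift_apply unshifted by (intro sum.cong) auto
  next
    case False
    then have "a i (k + j) = 0" "a (i - k) j = 0" if "j \<in> {- int M..int M}" for j
      using that by (auto intro!: band_op_entry_zero[OF assms(1)])
    then show ?thesis unfolding shifted shift_apply unshifted by simp
  qed
qed

lemma back_substitution:
  fixes M :: "'a \<Rightarrow> 'b \<Rightarrow> 'c::field"
  assumes "finite J" "j0 \<in> J" "M r j0 \<noteq> 0"
    and reduced: "\<And>q. q \<in> R \<Longrightarrow> (\<Sum>j\<in>J - {j0}. (M q j - M q j0 / M r j0 * M r j) * c j) = 0"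
  defines "c' \<equiv> c(j0 := - (\<Sum>j\<in>J - {j0}. M r j * c j) / M r j0)"
  shows "\<And>q. q \<in> insert r R \<Longrightarrow> (\<Sum>j\<in>J. M q j * c' j) = 0"
proof -
  define s where "s = (\<Sum>j\<in>J - {j0}. M r j * c j)"
  have sum_c': "(\<Sum>j\<in>J. f j * c' j) = (\<Sum>j\<in>J - {j0}. f j * c j) - f j0 * s / M r j0" for f
  proof -
    have "(\<Sum>j\<in>J. f j * c' j) = f j0 * c' j0 + (\<Sum>j\<in>J - {j0}. f j * c' j)"
      using assms(1,2) by (simp add: sum.remove)
    also have "(\<Sum>j\<in>J - {j0}. f j * c' j) = (\<Sum>j\<in>J - {j0}. f j * c j)"
      by (intro sum.cong) (auto simp: c'_def)
    finally show ?thesis by (simp add: c'_def s_def)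
  qed
  fix q assume "q \<in> insert r R"
  then consider "q = r" | "q \<in> R" by blast
  then show "(\<Sum>j\<in>J. M q j * c' j) = 0"
  proof cases
    case 1
    then show ?thesis unfolding sum_c' using assms(3) by (simp add: s_def)
  next
    case 2
    have "(\<Sum>j\<in>J - {j0}. M q j * c j) - M q j0 / M r j0 * s = 0"
      using reduced[OF 2] by (simp add: s_def algebra_simps sum_subtractf sum_distrib_left)
    then show ?thesis unfolding sum_c' by simp
  qed
qed

lemma homogeneous_system_nontrivial_solution:
  fixes M :: "'a \<Rightarrow> 'b \<Rightarrow> 'c::field"
  assumes "finite R" "finite J" "card R < card J"
  shows "\<exists>c. (\<forall>j. j \<notin> J \<longrightarrow> c j = 0) \<and> (\<exists>j\<in>J. c j \<noteq> 0) \<and> (\<forall>r\<in>R. (\<Sum>j\<in>J. M r j * c j) = 0)"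
  using assms
proof (induction R arbitrary: J M rule: finite_induct)
  case empty
  then obtain j0 where "j0 \<in> J" by fastforce
  then show ?case by (intro exI[of _ "\<lambda>j. if j = j0 then 1 else 0"]) auto
next
  case (insert r R)
  show ?case
  proof (cases "\<forall>j\<in>J. M r j = 0")
    case True
    then show ?thesis using insert.IH[of J M] insert.prems insert.hyps by auto
  next
    case False
    then obtain j0 where j0: "j0 \<in> J" "M r j0 \<noteq> 0" by blast
    have "card R < card (J - {j0})" using insert.prems insert.hyps j0 by (simp add: card_Diff_singleton)
    then obtain c where c: "\<forall>j. j \<notin> J - {j0} \<longrightarrow> c j = 0" "\<exists>j\<in>J - {j0}. c j \<noteq> 0"
        "\<forall>q\<in>R. (\<Sum>j\<in>J - {j0}. (M q j - M q j0 / M r j0 * M r j) * c j) = 0"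
      using insert.IH[of "J - {j0}" "\<lambda>q j. M q j - M q j0 / M r j0 * M r j"] insert.prems by auto
    let ?c' = "c(j0 := - (\<Sum>j\<in>J - {j0}. M r j * c j) / M r j0)"
    have "\<forall>q\<in>insert r R. (\<Sum>j\<in>J. M q j * ?c' j) = 0"
      using back_substitution[of J j0 M r R c] insert.prems j0 c(3) by blast
    moreover have "\<forall>j. j \<notin> J \<longrightarrow> ?c' j = 0" "\<exists>j\<in>J. ?c' j \<noteq> 0"
      using c(1,2) j0 by auto
    ultimately show ?thesis by blast
  qed
qed

text \<open>Dimension count: \<open>b\<close> maps vectors supported in \<open>{-L..L}\<close> to vectors supported in
  \<open>{-L-w..L+w}\<close>, which has only \<open>2 w\<close> more points; so \<open>n > 2 w\<close> further vectors supported in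
  \<open>{-L..L}\<close> force a nontrivial relation between them and the image.\<close>

lemma band_op_range_meets_span:
  assumes band: "band_op b w" and "2 * w < n" and z: "\<And>m. m < n \<Longrightarrow> supported_in (z m) {- int L..int L}"
  obtains x co where "supported_in x {- int L..int L}" "op_apply b x = (\<lambda>r. \<Sum>m<n. co m * z m r)"
    "(\<exists>i. x i \<noteq> 0) \<or> (\<exists>m<n. co m \<noteq> 0)"
proof -
  define I1 where "I1 = {- int L..int L}"
  define I2 where "I2 = {- int L - int w..int L + int w}"
  define J :: "(int + nat) set" where "J = Inl ` I1 \<union> Inr ` {..<n}"
  have "card J = card I1 + n"
    unfolding J_def by (subst card_Un_disjoint) (auto simp: card_image I1_def)
  then have "card I2 < card J" using \<open>2 * w < n\<close> by (simp add: I1_def I2_def)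
  define Mx where "Mx = (\<lambda>r j. case j of Inl i \<Rightarrow> b r i | Inr m \<Rightarrow> - z m r)"
  have "finite I2" "finite J" by (simp_all add: I1_def I2_def J_def)
  then obtain cc where cc0: "\<forall>j. j \<notin> J \<longrightarrow> cc j = 0" and cc_nz: "\<exists>j\<in>J. cc j \<noteq> 0"
      and cc_sol: "\<forall>r\<in>I2. (\<Sum>j\<in>J. Mx r j * cc j) = 0"
    using homogeneous_system_nontrivial_solution[of I2 J Mx] \<open>card I2 < card J\<close> by blast
  define x where "x = (\<lambda>i. cc (Inl i))"
  define co where "co = (\<lambda>m. cc (Inr m))"
  have x: "supported_in x I1" using cc0 by (auto simp: supported_in_def x_def J_def)
  have Ax: "op_apply b x r = (\<Sum>i\<in>I1. b r i * x i)" for r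
    by (rule op_apply_eq_sum[OF band]) (use x in \<open>auto simp: supported_in_def I1_def\<close>)
  have solves: "op_apply b x r = (\<Sum>m<n. co m * z m r)" for r
  proof (cases "r \<in> I2")
    case True
    have "(\<Sum>j\<in>J. Mx r j * cc j) = (\<Sum>j\<in>Inl ` I1. Mx r j * cc j) + (\<Sum>j\<in>Inr ` {..<n}. Mx r j * cc j)"
      unfolding J_def by (rule sum.union_disjoint) (auto simp: I1_def)
    also have "\<dots> = op_apply b x r - (\<Sum>m<n. co m * z m r)"
      unfolding Ax by (simp add: sum.reindex Mx_def x_def co_def sum_negf mult.commute)
    finally show ?thesis using cc_sol True by simp
  next
    case False
    then have "b r i = 0" if "i \<in> I1" for i
      using that by (intro band_op_entry_zero[OF band]) (auto simp: I1_def I2_def)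
    moreover have "z m r = 0" if "m < n" for m
      using z[OF that] False by (auto simp: supported_in_def I2_def)
    ultimately show ?thesis by (simp add: Ax)
  qed
  moreover have "(\<exists>i. x i \<noteq> 0) \<or> (\<exists>m<n. co m \<noteq> 0)"
    using cc_nz by (auto simp: J_def x_def co_def)
  ultimately show ?thesis
    using that[of x co] x solves by (auto simp: I1_def)
qed

lemma adjoint_bounded_below_on_range:
  assumes band: "band_op b w" and "c > 0" and lower: "\<And>x. x \<in> l2 \<Longrightarrow> c * l2norm x \<le> l2norm (op_apply b x)"
    and "x \<in> l2" "finite T" "supported_in (op_apply b x) T"
  shows "c * l2norm (op_apply b x) \<le> l2norm (op_apply (adjoint_op b) (op_apply b x))"
proof -
  define z where "z = op_apply b x"
  have "(l2norm z)\<^sup>2 = Re (\<Sum>i\<in>T. z i * cnj (z i))"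
    using l2_finite_support(2)[OF assms(5,6)]
    by (simp add: z_def l2norm_power2 sqmod_def Re_sum complex_mult_cnj cmod_power2)
  also have "\<dots> \<le> cmod (\<Sum>i\<in>T. op_apply b x i * cnj (z i))"
    unfolding z_def by (rule complex_Re_le_cmod)
  also have "\<dots> \<le> l2norm x * l2norm (op_apply (adjoint_op b) z)"
    using assms(4-6) by (intro cmod_pairing_le[OF band]) (auto simp: z_def)
  also have "\<dots> \<le> l2norm z / c * l2norm (op_apply (adjoint_op b) z)"
    using lower[OF assms(4)] \<open>c > 0\<close>
    by (intro mult_right_mono) (auto simp: z_def field_simps l2norm_nonneg)
  finally have "l2norm z * (c * l2norm z) \<le> l2norm z * l2norm (op_apply (adjoint_op b) z)"
    using \<open>c > 0\<close> by (simp add: field_simps power2_eq_square)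
  moreover have "l2norm z = 0 \<or> l2norm z > 0" using l2norm_nonneg[of z] by linarith
  ultimately show ?thesis
    unfolding z_def[symmetric] by (auto simp: l2norm_nonneg mult_le_cancel_left_pos)
qed

lemma recurring_copy:
  assumes band: "band_op a w" and "recurs_at a (int M + int w) k" and y: "supported_in y {- int M..int M}"
  shows "supported_in (shift k y) {k - (int M + int w)..k + (int M + int w)}"
    "supported_in (op_apply a (shift k y)) {k - (int M + int w)..k + (int M + int w)}"
    "l2norm2 (shift k y) = l2norm2 y" "l2norm2 (op_apply a (shift k y)) = l2norm2 (op_apply a y)"
proof -
  have Ay: "op_apply a (shift k y) = shift k (op_apply a y)"
    by (rule op_apply_shift[OF assms])
  show "supported_in (shift k y) {k - (int M + int w)..k + (int M + int w)}"
    using supported_in_shift[OF y] by (rule supported_in_mono) auto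
  show "supported_in (op_apply a (shift k y)) {k - (int M + int w)..k + (int M + int w)}"
    unfolding Ay using supported_in_shift[OF supported_in_op_apply[OF band y]] by simp
  show "l2norm2 (shift k y) = l2norm2 y" "l2norm2 (op_apply a (shift k y)) = l2norm2 (op_apply a y)"
    unfolding Ay by (rule l2norm2_shift)+
qed

lemma disjoint_recurring_copies:
  fixes n :: nat
  assumes band: "band_op a w" and rec: "recurrent a" and y: "supported_in y {- int M..int M}"
  obtains z and L :: nat where "\<And>m. m < n \<Longrightarrow> supported_in (z m) {- int L..int L}"
    "\<And>co. l2norm2 (\<lambda>i. \<Sum>m<n. co m * z m i) = (\<Sum>m<n. (cmod (co m))\<^sup>2) * l2norm2 y"
    "\<And>co. l2norm2 (op_apply a (\<lambda>i. \<Sum>m<n. co m * z m i))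
        = (\<Sum>m<n. (cmod (co m))\<^sup>2) * l2norm2 (op_apply a y)"
proof -
  define R where "R = int M + int w"
  have "0 \<le> R" by (simp add: R_def)
  with recurrent_disjoint_windows[OF rec, of "\<lambda>_. R"]
  obtain k :: "nat \<Rightarrow> int" where rk: "\<And>m. recurs_at a R (k m)"
      and disj: "\<And>l m. l \<noteq> m \<Longrightarrow> {k l - R..k l + R} \<inter> {k m - R..k m + R} = {}"
    by blast
  define W where "W = (\<lambda>m. {k m - R..k m + R})"
  define z where "z = (\<lambda>m. shift (k m) y)"
  have finW: "finite (W m)" for m by (simp add: W_def)
  have z: "supported_in (z m) (W m)" "supported_in (op_apply a (z m)) (W m)"
    "l2norm2 (z m) = l2norm2 y" "l2norm2 (op_apply a (z m)) = l2norm2 (op_apply a y)" for m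
    using recurring_copy[OF band rk[unfolded R_def] y] by (simp_all add: z_def W_def R_def)
  have l2: "z m \<in> l2" "op_apply a (z m) \<in> l2" for m
    using l2_finite_support(1)[OF finW] z by blast+
  define L where "L = nat ((\<Sum>m<n. \<bar>k m\<bar>) + R)"
  have "W m \<subseteq> {- int L..int L}" if "m < n" for m
  proof -
    have "\<bar>k m\<bar> \<le> (\<Sum>m<n. \<bar>k m\<bar>)" using that by (intro member_le_sum) auto
    then show ?thesis using \<open>0 \<le> R\<close> by (auto simp: W_def L_def)
  qed
  then have "supported_in (z m) {- int L..int L}" if "m < n" for m
    using z(1) that by (blast intro: supported_in_mono)
  moreover have disjW: "W l \<inter> W m = {}" if "l \<noteq> m" for l m using disj[OF that] by (simp add: W_def)
  ultimately show ?thesis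
  proof (intro that)
    fix co :: "nat \<Rightarrow> complex"
    show "l2norm2 (\<lambda>i. \<Sum>m<n. co m * z m i) = (\<Sum>m<n. (cmod (co m))\<^sup>2) * l2norm2 y"
      using finW z(1) disjW l2(1)
      by (subst l2norm2_disjoint_combination[where W = W]) (auto simp: z(3) sum_distrib_right)
    show "l2norm2 (op_apply a (\<lambda>i. \<Sum>m<n. co m * z m i))
        = (\<Sum>m<n. (cmod (co m))\<^sup>2) * l2norm2 (op_apply a y)"
      unfolding op_apply_sum op_apply_scale using finW z(2) disjW l2(2)
      by (subst l2norm2_disjoint_combination[where W = W]) (auto simp: z(4) sum_distrib_right)
  qed
qed

text \<open>The heart of \<open>\<nu>(A) \<le> \<nu>(A\<^sup>*)\<close>: some nonzero combination \<open>z\<close> of \<open>2 w + 1\<close> disjoint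
  recurring copies of \<open>y\<close> lies in the range of \<open>b\<close>, where \<open>b\<^sup>*\<close> is bounded below by \<open>c\<close>; and
  the copies scale \<open>\<parallel>z\<parallel>\<close> and \<open>\<parallel>b\<^sup>* z\<parallel>\<close> by the same factor relative to \<open>\<parallel>y\<parallel>\<close> and \<open>\<parallel>b\<^sup>* y\<parallel>\<close>.\<close>

lemma adjoint_lower_bound_finite_support:
  assumes band: "band_op b w" and rec: "recurrent b" and "c > 0"
    and lower: "\<And>x. x \<in> l2 \<Longrightarrow> c * l2norm x \<le> l2norm (op_apply b x)"
    and y: "supported_in y {- int M..int M}"
  shows "c * l2norm y \<le> l2norm (op_apply (adjoint_op b) y)"
proof -
  let ?B = "adjoint_op b"
  define n where "n = 2 * w + 1"
  obtain z L where z: "\<And>m. m < n \<Longrightarrow> supported_in (z m) {- int L..int L}"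
    and norm_z: "\<And>co. l2norm2 (\<lambda>i. \<Sum>m<n. co m * z m i) = (\<Sum>m<n. (cmod (co m))\<^sup>2) * l2norm2 y"
    and norm_Bz: "\<And>co. l2norm2 (op_apply ?B (\<lambda>i. \<Sum>m<n. co m * z m i))
                    = (\<Sum>m<n. (cmod (co m))\<^sup>2) * l2norm2 (op_apply ?B y)"
    using disjoint_recurring_copies[OF band_op_adjoint[OF band] recurrent_adjoint[OF rec] y, where n = n]
    by blast
  have "2 * w < n" by (simp add: n_def)
  then obtain x co where x: "supported_in x {- int L..int L}"
      and Ax: "op_apply b x = (\<lambda>r. \<Sum>m<n. co m * z m r)"
      and nontrivial: "(\<exists>i. x i \<noteq> 0) \<or> (\<exists>m<n. co m \<noteq> 0)"
    by (rule band_op_range_meets_span[OF band _ z])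
  have x_l2: "x \<in> l2" using l2_finite_support(1)[OF _ x] by simp
  have "\<exists>m<n. co m \<noteq> 0"
  proof (rule ccontr)
    assume "\<not> (\<exists>m<n. co m \<noteq> 0)"
    then have "op_apply b x = (\<lambda>r. 0)" unfolding Ax by simp
    then have "l2norm x = 0" using lower[OF x_l2] \<open>c > 0\<close> l2norm_nonneg[of x]
      by (simp add: l2norm_def mult_le_0_iff)
    then show False using nontrivial \<open>\<not> (\<exists>m<n. co m \<noteq> 0)\<close> l2norm_eq_0_iff[OF x_l2] by auto
  qed
  then obtain m where "m < n" "co m \<noteq> 0" by blast
  define P where "P = (\<Sum>m<n. (cmod (co m))\<^sup>2)"
  have "P > 0" unfolding P_def using \<open>m < n\<close> \<open>co m \<noteq> 0\<close> by (intro sum_pos2[of "{..<n}" m]) auto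
  have "c * l2norm (op_apply b x) \<le> l2norm (op_apply ?B (op_apply b x))"
    using \<open>c > 0\<close> lower x_l2 supported_in_op_apply[OF band x]
    by (intro adjoint_bounded_below_on_range[OF band]) auto
  then have "sqrt P * (c * l2norm y) \<le> sqrt P * l2norm (op_apply ?B y)"
    unfolding l2norm_eq_sqrt Ax norm_z norm_Bz P_def[symmetric] by (simp add: real_sqrt_mult mult_ac)
  then show ?thesis using \<open>P > 0\<close> by simp
qed

lemma nu_le_nu_adjoint:
  assumes "band_op b w" "recurrent b"
  shows "nu b \<le> nu (adjoint_op b)"
proof (cases "nu b = 0")
  case True then show ?thesis by (simp add: nu_nonneg)
next
  case False
  then have "nu b > 0" using nu_nonneg[of b] by linarith
  show ?thesis
  proof (rule field_le_epsilon)
    fix e :: real assume "e > 0"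
    then obtain M u where u: "supported_in u {- int M..int M}" "u \<in> l2" "l2norm u = 1"
        "l2norm (op_apply (adjoint_op b) u) < nu (adjoint_op b) + e"
      using nu_approx_finite_support[OF band_op_adjoint[OF assms(1)] \<open>e > 0\<close>] by blast
    have "nu b * l2norm u \<le> l2norm (op_apply (adjoint_op b) u)"
      using \<open>nu b > 0\<close> nu_mult_l2norm_le[OF assms(1)]
      by (intro adjoint_lower_bound_finite_support[OF assms _ _ u(1)])
    then show "nu b \<le> nu (adjoint_op b) + e" using u(3,4) by simp
  qed
qed

lemma nu_adjoint:
  assumes "band_op a w" "recurrent a"
  shows "nu (adjoint_op a) = nu a"
  using nu_le_nu_adjoint[OF assms] nu_le_nu_adjoint[OF band_op_adjoint recurrent_adjoint, OF assms]
  by simp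

section \<open>Invertibility\<close>

lemma op_apply_inj_on_l2:
  assumes "band_op a w" "nu a > 0"
  shows "inj_on (op_apply a) l2"
proof (rule inj_onI)
  fix x x' assume x: "x \<in> l2" "x' \<in> l2" "op_apply a x = op_apply a x'"
  have d: "(\<lambda>i. x i - x' i) \<in> l2" by (rule l2_diff[OF x(1,2)])
  have "nu a * l2norm (\<lambda>i. x i - x' i) \<le> l2norm (op_apply a (\<lambda>i. x i - x' i))"
    by (rule nu_mult_l2norm_le[OF assms(1) d])
  also have "\<dots> = 0" using x(3) by (simp add: op_apply_diff l2norm_def)
  finally have "l2norm (\<lambda>i. x i - x' i) = 0"
    using assms(2) l2norm_nonneg[of "\<lambda>i. x i - x' i"] by (simp add: mult_le_0_iff)
  then show "x = x'" using l2norm_eq_0_iff[OF d] by (auto simp: fun_eq_iff dest: fun_cong)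
qed

text \<open>Parallelogram law: the midpoint of two near-minimizers of \<open>\<parallel>y - A x\<parallel>\<close> is no better than
  the minimum, so the near-minimizers are close in the image, hence close (\<open>\<nu>(A) > 0\<close>).\<close>

lemma minimizing_sequence_Cauchy:
  assumes band: "band_op a w" and "nu a > 0" and y: "y \<in> l2" and X: "\<And>n. X n \<in> l2"
    and D: "\<And>x. x \<in> l2 \<Longrightarrow> D \<le> l2norm2 (\<lambda>i. y i - op_apply a x i)"
    and XD: "\<And>n. l2norm2 (\<lambda>i. y i - op_apply a (X n) i) < D + inverse (real (Suc n))"
    and "e > 0"
  shows "\<exists>N. \<forall>m\<ge>N. \<forall>n\<ge>N. l2norm (\<lambda>i. X m i - X n i) \<le> e"
proof -
  let ?u = "\<lambda>n i. y i - op_apply a (X n) i"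
  have u: "?u n \<in> l2" for n using l2_diff[OF y op_apply_l2[OF band X]] .
  have close: "(nu a)\<^sup>2 * l2norm2 (\<lambda>i. X m i - X n i) \<le> 2 * inverse (real (Suc m)) + 2 * inverse (real (Suc n))"
    for m n
  proof -
    define h where "h = (\<lambda>i. of_real (1 / 2) * (X m i + X n i))"
    have "h \<in> l2" unfolding h_def by (intro l2_scale(1) l2_add(1) X)
    have "(\<lambda>i. ?u m i + ?u n i) = (\<lambda>i. 2 * (y i - op_apply a h i))"
      unfolding h_def op_apply_scale op_apply_add by (auto simp: algebra_simps)
    then have "l2norm2 (\<lambda>i. ?u m i + ?u n i) = 4 * l2norm2 (\<lambda>i. y i - op_apply a h i)"
      using l2_scale(2)[OF l2_diff[OF y op_apply_l2[OF band \<open>h \<in> l2\<close>]], of 2] by simp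
    then have "4 * D \<le> l2norm2 (\<lambda>i. ?u m i + ?u n i)" using D[OF \<open>h \<in> l2\<close>] by simp
    moreover have "(\<lambda>i. ?u n i - ?u m i) = op_apply a (\<lambda>i. X m i - X n i)"
      by (simp add: op_apply_diff)
    ultimately have A: "l2norm2 (op_apply a (\<lambda>i. X m i - X n i)) \<le> 2 * inverse (real (Suc m)) + 2 * inverse (real (Suc n))"
      using l2_parallelogram[OF u u, of n m] XD[of m] XD[of n] by (simp add: add.commute)
    have "nu a * l2norm (\<lambda>i. X m i - X n i) \<le> l2norm (op_apply a (\<lambda>i. X m i - X n i))"
      by (rule nu_mult_l2norm_le[OF band l2_diff[OF X X]])
    then have "(nu a * l2norm (\<lambda>i. X m i - X n i))\<^sup>2 \<le> (l2norm (op_apply a (\<lambda>i. X m i - X n i)))\<^sup>2"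
      using \<open>nu a > 0\<close> by (intro power_mono) (auto simp: l2norm_nonneg)
    then show ?thesis using A by (simp add: power_mult_distrib l2norm_power2)
  qed
  obtain N where N: "inverse (real (Suc N)) < (nu a)\<^sup>2 * e\<^sup>2 / 4"
    using reals_Archimedean[of "(nu a)\<^sup>2 * e\<^sup>2 / 4"] \<open>nu a > 0\<close> \<open>e > 0\<close> by auto
  have "l2norm (\<lambda>i. X m i - X n i) \<le> e" if "m \<ge> N" "n \<ge> N" for m n
  proof -
    have "inverse (real (Suc m)) \<le> inverse (real (Suc N))" "inverse (real (Suc n)) \<le> inverse (real (Suc N))"
      using that by (auto simp: field_simps)
    then have "(nu a)\<^sup>2 * l2norm2 (\<lambda>i. X m i - X n i) \<le> (nu a)\<^sup>2 * e\<^sup>2"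
      using close[of m n] N by linarith
    then have "l2norm2 (\<lambda>i. X m i - X n i) \<le> e\<^sup>2" using \<open>nu a > 0\<close> by simp
    then show ?thesis
      using \<open>e > 0\<close> real_sqrt_le_mono[of _ "e\<^sup>2"] by (simp add: l2norm_eq_sqrt)
  qed
  then show ?thesis by blast
qed

lemma best_approximation:
  assumes band: "band_op a w" and "nu a > 0" and y: "y \<in> l2"
  obtains x where "x \<in> l2"
    "\<And>x'. x' \<in> l2 \<Longrightarrow> l2norm2 (\<lambda>i. y i - op_apply a x i) \<le> l2norm2 (\<lambda>i. y i - op_apply a x' i)"
proof -
  define Q where "Q = {l2norm2 (\<lambda>i. y i - op_apply a x i) | x. x \<in> l2}"
  define D where "D = Inf Q"
  have "Q \<noteq> {}" using delta_l2 by (auto simp: Q_def)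
  have "bdd_below Q" by (rule bdd_belowI[of _ 0]) (auto simp: Q_def l2norm2_nonneg)
  have D: "D \<le> l2norm2 (\<lambda>i. y i - op_apply a x i)" if "x \<in> l2" for x
    unfolding D_def using \<open>bdd_below Q\<close> that by (intro cInf_lower) (auto simp: Q_def)
  have "D \<ge> 0" unfolding D_def using \<open>Q \<noteq> {}\<close> by (intro cInf_greatest) (auto simp: Q_def l2norm2_nonneg)
  have "\<exists>x. x \<in> l2 \<and> l2norm2 (\<lambda>i. y i - op_apply a x i) < D + inverse (real (Suc n))" for n
    using cInf_less_iff[OF \<open>Q \<noteq> {}\<close> \<open>bdd_below Q\<close>, of "D + inverse (real (Suc n))"]
    by (auto simp: D_def Q_def)
  then obtain X where X: "\<And>n. X n \<in> l2"
    and XD: "\<And>n. l2norm2 (\<lambda>i. y i - op_apply a (X n) i) < D + inverse (real (Suc n))"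
    by metis
  obtain x where x: "x \<in> l2" and lim: "(\<lambda>n. l2norm (\<lambda>i. X n i - x i)) \<longlonglongrightarrow> 0"
    using l2_complete[OF X minimizing_sequence_Cauchy[OF band \<open>nu a > 0\<close> y X D XD]] by blast
  obtain K where K: "\<And>x. x \<in> l2 \<Longrightarrow> l2norm (op_apply a x) \<le> K * l2norm x"
    using band_op_bounded[OF band] by metis
  have bound: "l2norm (\<lambda>i. y i - op_apply a x i)
      \<le> K * l2norm (\<lambda>i. X n i - x i) + sqrt (D + inverse (real (Suc n)))" for n
  proof -
    have "l2norm (\<lambda>i. y i - op_apply a x i)
        \<le> l2norm (op_apply a (\<lambda>i. X n i - x i)) + l2norm (\<lambda>i. y i - op_apply a (X n) i)"
      using l2_add(2)[OF op_apply_l2[OF band l2_diff[OF X[of n] x]] l2_diff[OF y op_apply_l2[OF band X[of n]]]]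
      by (simp add: op_apply_diff algebra_simps)
    also have "\<dots> \<le> K * l2norm (\<lambda>i. X n i - x i) + sqrt (D + inverse (real (Suc n)))"
      using K[OF l2_diff[OF X x]] XD[of n] by (intro add_mono) (auto simp: l2norm_eq_sqrt)
    finally show ?thesis .
  qed
  have "(\<lambda>n. K * l2norm (\<lambda>i. X n i - x i) + sqrt (D + inverse (real (Suc n))))
      \<longlonglongrightarrow> K * 0 + sqrt (D + 0)"
    by (intro tendsto_intros lim LIMSEQ_inverse_real_of_nat)
  then have "l2norm (\<lambda>i. y i - op_apply a x i) \<le> sqrt D"
    using bound by (intro LIMSEQ_le_const) auto
  then have "l2norm2 (\<lambda>i. y i - op_apply a x i) \<le> D"
    using \<open>D \<ge> 0\<close> l2norm2_nonneg by (simp add: l2norm_eq_sqrt)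
  then show ?thesis using that x D by force
qed

lemma quadratic_form_nonneg_imp_zero:
  fixes p :: complex and V :: real
  assumes nonneg: "\<And>t. 0 \<le> - 2 * Re (cnj t * p) + (cmod t)\<^sup>2 * V" and "V \<ge> 0"
  shows "p = 0"
proof -
  define s where "s = 1 / (V + 1)"
  have s: "s > 0" "s * V < 1" using \<open>V \<ge> 0\<close> by (auto simp: s_def field_simps)
  have "0 \<le> - 2 * Re (cnj (of_real s * p) * p) + (cmod (of_real s * p))\<^sup>2 * V"
    by (rule nonneg)
  also have "\<dots> = s * (cmod p)\<^sup>2 * (s * V - 2)"
  proof -
    have re: "cnj (of_real s * p) * p = of_real (s * (cmod p)\<^sup>2)"
      using complex_norm_square[of p] by (simp add: mult_ac)
    have norm: "(cmod (of_real s * p))\<^sup>2 = s\<^sup>2 * (cmod p)\<^sup>2"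
      using s by (simp add: norm_mult power_mult_distrib)
    show ?thesis unfolding re norm Re_complex_of_real by (simp add: algebra_simps power2_eq_square)
  qed
  finally have "0 \<le> s * (cmod p)\<^sup>2 * (s * V - 2)" .
  then have "s * (cmod p)\<^sup>2 \<le> 0" using s by (simp add: mult_le_0_iff zero_le_mult_iff)
  then show ?thesis using s by (simp add: mult_le_0_iff)
qed

text \<open>First variation: moving \<open>x\<close> by \<open>t \<delta>\<^sub>k\<close> changes \<open>\<parallel>r\<parallel>\<^sup>2\<close> by \<open>-2 Re (t\<^sup>* p) + |t|\<^sup>2 \<parallel>A \<delta>\<^sub>k\<parallel>\<^sup>2\<close>
  with \<open>p = (A\<^sup>* r)\<^sub>k\<close>, and minimality forces \<open>p = 0\<close>.\<close>

lemma best_approximation_residual: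
  assumes band: "band_op a w" and x: "x \<in> l2" and y: "y \<in> l2"
    and min: "\<And>x'. x' \<in> l2 \<Longrightarrow> l2norm2 (\<lambda>i. y i - op_apply a x i) \<le> l2norm2 (\<lambda>i. y i - op_apply a x' i)"
  shows "op_apply (adjoint_op a) (\<lambda>i. y i - op_apply a x i) = (\<lambda>i. 0)"
proof
  fix k
  define r where "r = (\<lambda>i. y i - op_apply a x i)"
  define v where "v = (\<lambda>j. a j k)"
  define S where "S = {k - int w..k + int w}"
  have r: "r \<in> l2" unfolding r_def by (rule l2_diff[OF y op_apply_l2[OF band x]])
  have "finite S" by (simp add: S_def)
  have v: "v j = 0" if "j \<notin> S" for j
    using that by (auto simp: v_def S_def intro!: band_op_entry_zero[OF band])
  define p where "p = (\<Sum>j\<in>S. r j * cnj (v j))"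
  have "op_apply (adjoint_op a) r k = (\<Sum>j\<in>S. adjoint_op a k j * r j)"
    using v by (intro op_apply_eq_sum[OF band_op_adjoint[OF band] \<open>finite S\<close>]) (simp add: adjoint_op_def v_def)
  then have A'r: "op_apply (adjoint_op a) r k = p" by (simp add: p_def adjoint_op_def v_def mult.commute)
  have "0 \<le> - 2 * Re (cnj t * p) + (cmod t)\<^sup>2 * (\<Sum>j\<in>S. (cmod (v j))\<^sup>2)" for t
  proof -
    have residual: "(\<lambda>i. y i - op_apply a (\<lambda>j. x j + t * delta k j) i) = (\<lambda>i. r i - t * v i)"
      by (simp add: op_apply_add op_apply_scale op_apply_delta[OF band] r_def v_def algebra_simps)
    have "l2norm2 r \<le> l2norm2 (\<lambda>i. r i - t * v i)"
      using min[of "\<lambda>j. x j + t * delta k j"] l2_add(1)[OF x l2_scale(1)[OF delta_l2]]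
      by (simp add: residual r_def)
    also have "\<dots> = l2norm2 r + (\<Sum>j\<in>S. sqmod (\<lambda>i. r i - t * v i) j - sqmod r j)"
      using v by (intro l2norm2_change_on_finite(2)[OF r \<open>finite S\<close>]) simp
    finally have "0 \<le> (\<Sum>j\<in>S. (cmod (r j - t * v j))\<^sup>2 - (cmod (r j))\<^sup>2)" by (simp add: sqmod_def)
    also have "\<dots> = (\<Sum>j\<in>S. - 2 * Re (cnj t * (r j * cnj (v j))) + (cmod t)\<^sup>2 * (cmod (v j))\<^sup>2)"
      by (intro sum.cong refl) (simp only: cmod_power2, simp add: power2_eq_square algebra_simps)
    also have "\<dots> = - 2 * (\<Sum>j\<in>S. Re (cnj t * (r j * cnj (v j)))) + (cmod t)\<^sup>2 * (\<Sum>j\<in>S. (cmod (v j))\<^sup>2)"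
      by (simp only: sum.distrib sum_distrib_left)
    also have "(\<Sum>j\<in>S. Re (cnj t * (r j * cnj (v j)))) = Re (cnj t * p)"
      by (simp only: p_def sum_distrib_left Re_sum)
    finally show ?thesis .
  qed
  then have "p = 0" by (rule quadratic_form_nonneg_imp_zero) (simp add: sum_nonneg)
  then show "op_apply (adjoint_op a) (\<lambda>i. y i - op_apply a x i) k = 0" using A'r by (simp add: r_def)
qed

lemma op_apply_surj_on_l2:
  assumes band: "band_op a w" and "nu a > 0" "nu (adjoint_op a) > 0"
  shows "op_apply a ` l2 = l2"
proof
  show "op_apply a ` l2 \<subseteq> l2" using op_apply_l2[OF band] by blast
  show "l2 \<subseteq> op_apply a ` l2"
  proof
    fix y assume y: "y \<in> l2"
    obtain x where x: "x \<in> l2"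
      and min: "\<And>x'. x' \<in> l2 \<Longrightarrow> l2norm2 (\<lambda>i. y i - op_apply a x i) \<le> l2norm2 (\<lambda>i. y i - op_apply a x' i)"
      using best_approximation[OF band \<open>nu a > 0\<close> y] by blast
    define r where "r = (\<lambda>i. y i - op_apply a x i)"
    have r: "r \<in> l2" unfolding r_def by (rule l2_diff[OF y op_apply_l2[OF band x]])
    have "nu (adjoint_op a) * l2norm r \<le> l2norm (op_apply (adjoint_op a) r)"
      by (rule nu_mult_l2norm_le[OF band_op_adjoint[OF band] r])
    also have "\<dots> = 0"
      using best_approximation_residual[OF band x y min] by (simp add: r_def l2norm_def)
    finally have "l2norm r = 0"
      using \<open>nu (adjoint_op a) > 0\<close> l2norm_nonneg[of r] by (simp add: mult_le_0_iff)
    then have "y = op_apply a x"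
      using l2norm_eq_0_iff[OF r] by (auto simp: r_def fun_eq_iff dest: fun_cong)
    then show "y \<in> op_apply a ` l2" using x by blast
  qed
qed

lemma almost_kernel_on_disjoint_windows:
  fixes eps :: "nat \<Rightarrow> real"
  assumes band: "band_op b w" and rec: "recurrent b" and "nu b = 0" and eps: "\<And>m. eps m > 0"
  obtains W V where "\<And>m. finite (W m)" "\<And>l m. l \<noteq> m \<Longrightarrow> W l \<inter> W m = {}"
    "\<And>m. supported_in (V m) (W m)" "\<And>m. V m \<in> l2" "\<And>m. l2norm (V m) = 1"
    "\<And>m. l2norm (op_apply b (V m)) < eps m"
proof -
  have "\<exists>M u. supported_in u {- int M..int M} \<and> u \<in> l2 \<and> l2norm u = 1 \<and> l2norm (op_apply b u) < eps m"
    for m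
    using nu_approx_finite_support[OF band eps[of m]] \<open>nu b = 0\<close> by (metis add_0)
  then obtain Mm U where U: "\<And>m. supported_in (U m) {- int (Mm m)..int (Mm m)}"
      "\<And>m. U m \<in> l2" "\<And>m. l2norm (U m) = 1" "\<And>m. l2norm (op_apply b (U m)) < eps m"
    by metis
  define R where "R = (\<lambda>m. int (Mm m) + int w)"
  obtain k :: "nat \<Rightarrow> int" where rk: "\<And>m. recurs_at b (R m) (k m)"
      and disj: "\<And>l m. l \<noteq> m \<Longrightarrow> {k l - R l..k l + R l} \<inter> {k m - R m..k m + R m} = {}"
    using recurrent_disjoint_windows[OF rec, of R] by (auto simp: R_def)
  define W where "W = (\<lambda>m. {k m - R m..k m + R m})"
  define V where "V = (\<lambda>m. shift (k m) (U m))"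
  have V: "supported_in (V m) (W m)" "l2norm2 (V m) = l2norm2 (U m)"
    "l2norm2 (op_apply b (V m)) = l2norm2 (op_apply b (U m))" for m
    using recurring_copy[OF band rk[of m, unfolded R_def] U(1)] by (simp_all add: V_def W_def R_def)
  have "finite (W m)" for m by (simp add: W_def)
  then show ?thesis
  proof (rule that)
    show "W l \<inter> W m = {}" if "l \<noteq> m" for l m using disj[OF that] by (simp add: W_def)
    show "supported_in (V m) (W m)" for m by (rule V(1))
    then show "V m \<in> l2" for m using l2_finite_support(1) \<open>\<And>m. finite (W m)\<close> by blast
    show "l2norm (V m) = 1" "l2norm (op_apply b (V m)) < eps m" for m
      using U(3,4)[of m] by (simp_all add: l2norm_eq_sqrt V(2,3))
  qed
qed

text \<open>When \<open>\<nu>(A\<^sup>*) = 0\<close>, sum unit vectors \<open>V\<^sub>m\<close> with \<open>\<parallel>A\<^sup>* V\<^sub>m\<parallel> < 4\<^sup>-\<^sup>m\<close> and disjoint supports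
  with weights \<open>2\<^sup>-\<^sup>m\<close>. A preimage \<open>x\<close> of the sum would satisfy
  \<open>2\<^sup>-\<^sup>m = \<langle>A x, V\<^sub>m\<rangle> = \<langle>x, A\<^sup>* V\<^sub>m\<rangle> \<le> 4\<^sup>-\<^sup>m \<parallel>x\<parallel>\<close> for every \<open>m\<close>. This explicit construction
  replaces the open mapping theorem.\<close>

lemma not_surj_if_nu_adjoint_zero:
  assumes band: "band_op a w" and rec: "recurrent a" and "nu (adjoint_op a) = 0"
  shows "op_apply a ` l2 \<noteq> l2"
proof -
  let ?B = "adjoint_op a"
  obtain V W where finW: "\<And>m. finite (W m)" and disjW: "\<And>l m. l \<noteq> m \<Longrightarrow> W l \<inter> W m = {}"
    and V: "\<And>m. supported_in (V m) (W m)" "\<And>m. V m \<in> l2" "\<And>m. l2norm (V m) = 1"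
    and BV: "\<And>m. l2norm (op_apply ?B (V m)) < (1 / 4) ^ m"
    using almost_kernel_on_disjoint_windows[OF band_op_adjoint[OF band] recurrent_adjoint[OF rec]
        \<open>nu ?B = 0\<close>, of "\<lambda>m. (1 / 4) ^ m"]
    by auto
  define z where "z = (\<lambda>i. \<Sum>m\<in>{m. i \<in> W m}. of_real ((1 / 2) ^ m) * V m i)"
  have z_on: "z i = of_real ((1 / 2) ^ m) * V m i" if "i \<in> W m" for m i
  proof -
    have "{m. i \<in> W m} = {m}" using that disjW by blast
    then show ?thesis by (simp add: z_def)
  qed
  have "z \<in> l2" unfolding z_def by (rule l2_disjoint_series[OF finW disjW V])
  moreover have "z \<notin> op_apply a ` l2"
  proof
    assume "z \<in> op_apply a ` l2"
    then obtain x where x: "x \<in> l2" "op_apply a x = z" by blast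
    have bound: "(1 / 2) ^ m \<le> l2norm x * (1 / 4) ^ m" for m
    proof -
      have "(\<Sum>i\<in>W m. V m i * cnj (V m i)) = of_real (sum (sqmod (V m)) (W m))"
        by (simp only: sqmod_def of_real_sum complex_norm_square)
      then have "(\<Sum>i\<in>W m. op_apply a x i * cnj (V m i)) = of_real ((1 / 2) ^ m * l2norm2 (V m))"
        using l2_finite_support(2)[OF finW V(1)]
        by (simp add: x(2) z_on sum_distrib_left[symmetric] mult.assoc)
      then have "(1 / 2) ^ m = cmod (\<Sum>i\<in>W m. op_apply a x i * cnj (V m i))"
        using V(3)[of m] by (simp add: l2norm_eq_sqrt norm_power norm_divide)
      also have "\<dots> \<le> l2norm x * l2norm (op_apply ?B (V m))"
        by (rule cmod_pairing_le[OF band finW V(1) x(1)])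
      also have "\<dots> \<le> l2norm x * (1 / 4) ^ m"
        using BV[of m] by (intro mult_left_mono) (auto simp: l2norm_nonneg)
      finally show ?thesis .
    qed
    obtain m where m: "l2norm x < 2 ^ m" using real_arch_pow[of 2 "l2norm x"] by auto
    have "(2 :: real) ^ m = (1 / 2) ^ m * 4 ^ m" by (simp flip: power_mult_distrib)
    also have "\<dots> \<le> l2norm x * (1 / 4) ^ m * 4 ^ m" using bound by (intro mult_right_mono) auto
    also have "\<dots> = l2norm x" by (simp flip: power_mult_distrib)
    finally show False using m by simp
  qed
  ultimately show ?thesis by blast
qed

lemma op_invertible_iff_nu_pos:
  assumes "band_op a w" "recurrent a"
  shows "op_invertible a \<longleftrightarrow> nu a > 0"
proof
  assume "op_invertible a"
  then have "op_apply a ` l2 = l2" by (simp add: op_invertible_def bij_betw_def)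
  then show "nu a > 0"
    using not_surj_if_nu_adjoint_zero[OF assms] nu_adjoint[OF assms] nu_nonneg[of a]
    by fastforce
next
  assume "nu a > 0"
  then show "op_invertible a"
    using op_apply_inj_on_l2[OF assms(1)] op_apply_surj_on_l2[OF assms(1)] nu_adjoint[OF assms]
    by (simp add: op_invertible_def bij_betw_def)
qed

lemma inv_into_op_apply:
  assumes "op_invertible a" "y \<in> l2"
  shows "inv_into l2 (op_apply a) y \<in> l2" "op_apply a (inv_into l2 (op_apply a) y) = y"
proof -
  have "y \<in> op_apply a ` l2" using assms by (simp add: op_invertible_def bij_betw_def)
  then show "inv_into l2 (op_apply a) y \<in> l2" "op_apply a (inv_into l2 (op_apply a) y) = y"
    by (rule inv_into_into, rule f_inv_into_f)
qed

lemma inv_into_normalized_image: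
  assumes band: "band_op a w" and inv: "op_invertible a" and x: "x \<in> l2" "l2norm x = 1"
    and pos: "l2norm (op_apply a x) > 0"
  shows "\<exists>y. y \<in> l2 \<and> l2norm y = 1 \<and> l2norm (inv_into l2 (op_apply a) y) = 1 / l2norm (op_apply a x)"
proof (intro exI conjI)
  define c :: complex where "c = of_real (1 / l2norm (op_apply a x))"
  have "cmod c = 1 / l2norm (op_apply a x)" using pos by (simp add: c_def norm_divide)
  then show "op_apply a (\<lambda>i. c * x i) \<in> l2" "l2norm (op_apply a (\<lambda>i. c * x i)) = 1"
    unfolding op_apply_scale using pos l2_scale(1,3)[OF op_apply_l2[OF band x(1)]] by auto
  have "inj_on (op_apply a) l2" using inv by (simp add: op_invertible_def bij_betw_def)
  then have "inv_into l2 (op_apply a) (op_apply a (\<lambda>i. c * x i)) = (\<lambda>i. c * x i)"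
    using l2_scale(1)[OF x(1)] by (rule inv_into_f_f)
  then show "l2norm (inv_into l2 (op_apply a) (op_apply a (\<lambda>i. c * x i))) = 1 / l2norm (op_apply a x)"
    using l2_scale(3)[OF x(1)] x(2) \<open>cmod c = 1 / l2norm (op_apply a x)\<close> by simp
qed

lemma inv_norm_eq:
  assumes band: "band_op a w" and inv: "op_invertible a" and "nu a > 0"
  shows "inv_norm a = ereal (1 / nu a)"
proof -
  let ?f = "op_apply a" and ?g = "inv_into l2 (op_apply a)"
  define T where "T = {l2norm (?g y) | y. y \<in> l2 \<and> l2norm y = 1}"
  have upper: "t \<le> 1 / nu a" if "t \<in> T" for t
  proof -
    obtain y where y: "y \<in> l2" "l2norm y = 1" "t = l2norm (?g y)" using \<open>t \<in> T\<close> by (auto simp: T_def)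
    then have "nu a * t \<le> 1"
      using nu_mult_l2norm_le[OF band inv_into_op_apply(1)[OF inv y(1)]] inv_into_op_apply(2)[OF inv y(1)]
      by simp
    then show ?thesis using \<open>nu a > 0\<close> by (simp add: field_simps)
  qed
  have in_T: "1 / l2norm (?f x) \<in> T" if x: "x \<in> l2" "l2norm x = 1" for x
    using inv_into_normalized_image[OF band inv x] nu_le[OF x, of a] \<open>nu a > 0\<close>
    unfolding T_def by force
  have "Sup T = 1 / nu a"
  proof (rule cSup_eq_non_empty)
    show "T \<noteq> {}" using in_T[OF delta_l2 l2norm_delta] by blast
    show "t \<le> 1 / nu a" if "t \<in> T" for t using upper[OF that] .
    fix B assume B: "\<And>t. t \<in> T \<Longrightarrow> t \<le> B"
    have "l2norm (?f x) > 0" if "x \<in> l2" "l2norm x = 1" for x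
      using nu_le[OF that, of a] \<open>nu a > 0\<close> by linarith
    then have "0 < 1 / l2norm (?f (delta 0))" using delta_l2 l2norm_delta by simp
    then have "B > 0" using B[OF in_T[OF delta_l2 l2norm_delta, of 0]] by linarith
    have "1 / B \<le> nu a"
    proof (rule nu_greatest)
      fix x assume x: "x \<in> l2" "l2norm x = 1"
      then have "1 / l2norm (?f x) \<le> B" "l2norm (?f x) > 0"
        using B[OF in_T[OF x]] nu_le[OF x, of a] \<open>nu a > 0\<close> by auto
      then show "1 / B \<le> l2norm (?f x)" using \<open>B > 0\<close> by (simp add: field_simps)
    qed
    then show "1 / nu a \<le> B" using \<open>B > 0\<close> \<open>nu a > 0\<close> by (simp add: field_simps)
  qed
  then show ?thesis using inv by (simp add: inv_norm_def T_def)
qed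

theorem lemma3p4:
  fixes a :: "int \<Rightarrow> int \<Rightarrow> complex" and w :: nat
  assumes "band_op a w" and "self_contained a w"
  shows "nu a = nu (adjoint_op a)
    \<and> (\<forall>N\<ge>1. nu_N a (Suc N) \<le> nu_N a N)
    \<and> (\<lambda>N. nu_N a N) \<longlonglongrightarrow> nu a
    \<and> ereal (nu a) = 1 / inv_norm a"
proof (intro conjI allI impI)
  have rec: "recurrent a" by (rule self_contained_recurrent[OF assms(2)])
  show "nu a = nu (adjoint_op a)" using nu_adjoint[OF assms(1) rec] by simp
  show "nu_N a (Suc N) \<le> nu_N a N" if "N \<ge> 1" for N using nu_N_antimono[OF that] by simp
  show "(\<lambda>N. nu_N a N) \<longlonglongrightarrow> nu a" by (rule nu_N_tendsto_nu[OF assms(1)])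
  show "ereal (nu a) = 1 / inv_norm a"
  proof (cases "nu a > 0")
    case True
    then show ?thesis
      using inv_norm_eq[OF assms(1) _ True] op_invertible_iff_nu_pos[OF assms(1) rec]
      by (simp add: one_ereal_def)
  next
    case False
    then have "nu a = 0" using nu_nonneg[of a] by linarith
    then show ?thesis
      using op_invertible_iff_nu_pos[OF assms(1) rec] by (simp add: inv_norm_def)
  qed
qed

end
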